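(* Let $\nu>-1$. Then there exist constants $C,c>0$ such that $$|\delta^*p_t^{\nu+1}(x,y)|\le \frac Ct\exp\Big(-\frac{|x-y|^2}{ct}\Big)\Big(1+\frac{\sqrt t}{x}\Big)^{\gamma_\nu}$$ for all $t>0$ and $x,y\in(0,\infty)$, where $\delta^*=-\partial_x+x-\frac1x(\nu+\frac12)$ acts in the variable $x$.
   Context: For $\alpha>-1$, $p_t^\alpha(x,y)$ is the integral kernel of $e^{-t\mathcal L_\alpha}$, where $\mathcal L_\alpha$ is the one-dimensional Laguerre operator on $(0,\infty)$ (eigenfunctions the Laguerre functions $\varphi_k^\alpha$, eigenvalues $4k+2\alpha+2$); explicitly, with $r=e^{-4t}$, $p_t^\alpha(x,y)=\frac{2(rxy)^{1/2}}{1-r}\exp\big(-\frac12\frac{1+r}{1-r}(x^2+y^2)\big)I_\alpha\big(\frac{2r^{1/2}}{1-r}xy\big)$, $I_\alpha$ the modified Bessel function of the first kind. $\gamma_\nu=-1/2-\nu$ if $-1<\nu<-1/2$ and $\gamma_\nu=0$ if $\nu\ge-1/2$. *)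

theory Defs
  imports "HOL-Analysis.Analysis"
begin

definition besselI :: "real \<Rightarrow> real \<Rightarrow> real" where
  "besselI a z = (\<Sum>m. (z / 2) powr (2 * real m + a) / (fact m * Gamma (real m + a + 1)))"

definition laguerre_heat_kernel :: "real \<Rightarrow> real \<Rightarrow> real \<Rightarrow> real \<Rightarrow> real" where
  "laguerre_heat_kernel a t x y =
     (let r = exp (-4 * t) in
      2 * sqrt (r * x * y) / (1 - r)
        * exp (- (1/2) * ((1 + r) / (1 - r)) * (x^2 + y^2))
        * besselI a (2 * sqrt r / (1 - r) * x * y))"

definition gamma_exp :: "real \<Rightarrow> real" where
  "gamma_exp \<nu> = (if -1 < \<nu> \<and> \<nu> < -1/2 then -1/2 - \<nu> else 0)"

definition delta_star :: "real \<Rightarrow> (real \<Rightarrow> real) \<Rightarrow> real \<Rightarrow> real" where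
  "delta_star \<nu> f x = - deriv f x + x * f x - (\<nu> + 1/2) / x * f x"

end

theory Submission
  imports Defs
begin

text \<open>
  Write \<open>\<rho> = e\<^sup>-\<^sup>2\<^sup>t\<close>, \<open>d = 1 - \<rho>\<^sup>2\<close> and \<open>l = \<rho>xy/d\<close>. Differentiating the kernel with
  \<open>I\<^sub>a' = I\<^sub>a\<^sub>-\<^sub>1 - (a/w) I\<^sub>a\<close> gives
  \<open>\<delta>*p\<^sub>t\<^sup>\<nu>\<^sup>+\<^sup>1(x,y) = (2/d)(2\<rho>\<surd>(xy)/d) E (x I\<^sub>\<nu>\<^sub>+\<^sub>1(2l) - \<rho>y I\<^sub>\<nu>(2l))\<close>,
  with \<open>E = exp(-(1+\<rho>\<^sup>2)(x\<^sup>2+y\<^sup>2)/(2d))\<close>.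

  For \<open>l \<le> 1\<close> the series gives \<open>I\<^sub>\<mu>(2l) \<le> 6 l\<^sup>\<mu>\<close>; when \<open>\<nu> < -1/2\<close> the singular factor
  \<open>l\<^sup>\<nu>\<^sup>+\<^sup>1\<^sup>/\<^sup>2\<close> is what produces \<open>(1 + \<surd>t/x)\<^sup>\<gamma>\<close>.
  For \<open>l \<ge> 1\<close> write \<open>I\<^sub>\<mu>(2l) = \<Sum>\<^sub>m (l\<^sup>m/m!) \<cdot> l\<^sup>m\<^sup>+\<^sup>\<mu>/\<Gamma>(m+\<mu>+1)\<close>. A Stirling bound makes
  the second factor \<open>O(e\<^sup>l/\<surd>l)\<close> uniformly in \<open>m\<close>, so \<open>I\<^sub>\<mu>(2l) = O(e\<^sup>2\<^sup>l/\<surd>l)\<close>; summing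
  the second differences of this series against the Poisson weights \<open>l\<^sup>m/m!\<close>, whose variance
  is \<open>l\<close>, gives the cancellation \<open>|I\<^sub>\<nu>(2l) - I\<^sub>\<nu>\<^sub>+\<^sub>1(2l)| = O(e\<^sup>2\<^sup>l l\<^sup>-\<^sup>3\<^sup>/\<^sup>2)\<close>.
  Splitting \<open>x I\<^sub>\<nu>\<^sub>+\<^sub>1 - \<rho>y I\<^sub>\<nu> = x(I\<^sub>\<nu>\<^sub>+\<^sub>1 - I\<^sub>\<nu>) + (x-y) I\<^sub>\<nu> + (1-\<rho>) y I\<^sub>\<nu>\<close>, the growth
  \<open>e\<^sup>2\<^sup>l\<close> is absorbed by \<open>E e\<^sup>2\<^sup>l \<le> exp(-(x-y)\<^sup>2/(4d)) exp(-(1-\<rho>)\<^sup>2(x\<^sup>2+y\<^sup>2)/(4d))\<close>, and each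
  remaining polynomial factor costs one \<open>\<surd>d\<close>. Finally \<open>\<surd>\<rho>/d \<le> 5/(4t)\<close> and \<open>d \<le> 4t\<close>.
\<close>

section \<open>Lower bounds for the Gamma function\<close>

lemma Gamma_ge_one_half:
  assumes "(u::real) > 0"
  shows "Gamma u \<ge> 1/2"
proof -
  have recurrence: "Gamma (v + 1) = v * Gamma v" if "v > 0" for v :: real
    using that by (intro Gamma_plus1) (auto elim!: nonpos_Ints_cases)
  have ge_one: "Gamma v \<ge> 1" if "v \<ge> 2" for v :: real
    using Gamma_real_strict_mono[of 2 v] that by (cases "v = 2") (auto simp: Gamma_numeral)
  have ge_half: "Gamma v \<ge> 1/2" if "v > 1" for v :: real
  proof (cases "v \<ge> 2")
    case False
    have "1 \<le> v * Gamma v" using ge_one[of "v + 1"] recurrence[of v] that by simp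
    also have "\<dots> \<le> 2 * Gamma v"
      using False that by (intro mult_right_mono) (auto intro: less_imp_le Gamma_real_pos)
    finally show ?thesis by simp
  qed (use ge_one in force)
  show ?thesis
  proof (cases "u > 1")
    case False
    have "1/2 \<le> u * Gamma u" using ge_half[of "u + 1"] recurrence[of u] assms by simp
    also have "\<dots> \<le> Gamma u"
      using False assms by (intro mult_left_le_one_le) (auto intro: less_imp_le Gamma_real_pos)
    finally show ?thesis .
  qed (use ge_half in blast)
qed

lemma ln_one_plus_le_cubic:
  assumes "(x::real) \<ge> 0"
  shows "ln (1 + x) \<le> x - x^2/2 + x^3/3"
proof -
  define f where "f z = z - z^2/2 + z^3/3 - ln (1 + z)" for z :: real
  have "f 0 \<le> f x"
  proof (rule DERIV_nonneg_imp_nondecreasing[OF assms])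
    fix z :: real assume z: "0 \<le> z" "z \<le> x"
    have "(f has_real_derivative 1 - z + z^2 - 1 / (1 + z)) (at z)"
      unfolding f_def[abs_def] using z
      by (auto intro!: derivative_eq_intros simp: power2_eq_square field_simps)
    moreover have "1 - z + z^2 - 1 / (1 + z) = z^3 / (1 + z)"
      using z by (simp add: field_simps power2_eq_square power3_eq_cube)
    ultimately show "\<exists>y. (f has_real_derivative y) (at z) \<and> 0 \<le> y"
      using z by auto
  qed
  then show ?thesis by (simp add: f_def)
qed

lemma ln_fact_ge:
  assumes "n \<ge> 1"
  shows "ln (fact n) \<ge> (real n + 1/2) * ln (real n) - real n + 1/2 + 1 / (2 * real n)"
  using assms
proof (induction n rule: dec_induct)
  case (step n)
  define m where "m = real n"
  have m1: "m \<ge> 1" using step.hyps by (simp add: m_def)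
  have ln_fact_Suc: "ln (fact (Suc n) :: real) = ln (m + 1) + ln (fact n)"
    using m1 by (simp add: m_def ln_mult add.commute)
  have "1 + 1/m = (m + 1) / m" using m1 by (simp add: field_simps)
  then have "ln (m + 1) - ln m = ln (1 + 1/m)" using m1 by (simp add: ln_div)
  also have "\<dots> \<le> 1/m - 1/(2*m^2) + 1/(3*m^3)"
    using ln_one_plus_le_cubic[of "1/m"] m1 by (simp add: power_divide)
  finally have "(m + 1/2) * (ln (m + 1) - ln m) \<le> (m + 1/2) * (1/m - 1/(2*m^2) + 1/(3*m^3))"
    using m1 by (intro mult_left_mono) auto
  also have "\<dots> \<le> 1 + 1/(2*m) - 1/(2*(m+1))"
  proof -
    have "1 + 1/(2*m) - 1/(2*(m+1)) - (m + 1/2) * (1/m - 1/(2*m^2) + 1/(3*m^3))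
        = (5*m + 2) * (m - 1) / (12 * m^3 * (m + 1))"
      using m1 by (simp add: divide_simps) algebra
    moreover have "(5*m + 2) * (m - 1) / (12 * m^3 * (m + 1)) \<ge> 0"
      using m1 by simp
    ultimately show ?thesis by linarith
  qed
  finally have "(m + 1/2) * (ln (m + 1) - ln m) \<le> 1 + 1/(2*m) - 1/(2*(m+1))" .
  then show ?case
    using step.IH unfolding ln_fact_Suc by (simp add: m_def algebra_simps)
qed simp

lemma ln_Gamma_plus_ge:
  assumes "(a::real) > 0" "\<theta> \<ge> 0"
  shows "ln (Gamma (a + 1 + \<theta>)) \<ge> ln (Gamma (a + 1)) + \<theta> * ln a"
proof (cases "\<theta> = 0")
  case False
  then have "\<theta> > 0" using assms by simp
  let ?f = "ln \<circ> Gamma :: real \<Rightarrow> real"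
  have "Gamma (a + 1) = a * Gamma a"
    using assms by (intro Gamma_plus1) (auto elim!: nonpos_Ints_cases)
  then have "?f (a + 1) = ln a + ?f a"
    using ln_mult_pos[OF assms(1) Gamma_real_pos[OF assms(1)]] by simp
  then have "ln a = (?f a - ?f (a + 1)) / (a - (a + 1))"
    by simp
  also have "\<dots> \<le> (?f a - ?f (a + 1 + \<theta>)) / (a - (a + 1 + \<theta>))"
    using assms \<open>\<theta> > 0\<close> by (intro convex_on_slope_le(1)[OF log_convex_Gamma_real]) auto
  also have "\<dots> \<le> (?f (a + 1) - ?f (a + 1 + \<theta>)) / (a + 1 - (a + 1 + \<theta>))"
    using assms \<open>\<theta> > 0\<close> by (intro convex_on_slope_le(2)[OF log_convex_Gamma_real]) auto
  also have "\<dots> = (ln (Gamma (a + 1 + \<theta>)) - ln (Gamma (a + 1))) / \<theta>"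
    by (simp add: divide_simps)
  finally show ?thesis using \<open>\<theta> > 0\<close> by (simp add: field_simps)
qed simp

lemma ln_Gamma_ge:
  assumes "(s::real) \<ge> 1"
  shows "ln (Gamma (s + 1)) \<ge> (s + 1/2) * ln s - s - 3/2"
proof -
  define n where "n = nat \<lfloor>s\<rfloor>"
  define \<theta> where "\<theta> = s - real n"
  have n1: "n \<ge> 1" using assms by (simp add: n_def le_nat_iff)
  have "real n \<le> s" "s < real n + 1" using assms by (simp_all add: n_def)
  then have \<theta>: "0 \<le> \<theta>" "\<theta> < 1" by (simp_all add: \<theta>_def)
  have "Gamma (real n + 1) = fact n"
    using Gamma_fact[of n, where 'a=real] by (simp add: add.commute)
  then have "ln (Gamma (s + 1)) \<ge> ln (fact n) + \<theta> * ln (real n)"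
    using ln_Gamma_plus_ge[of "real n" \<theta>] n1 \<theta> by (simp add: \<theta>_def add_ac)
  moreover have "ln (fact n) \<ge> (real n + 1/2) * ln (real n) - real n + 1/2"
    using ln_fact_ge[OF n1] divide_nonneg_nonneg[of 1 "2 * real n"] by linarith
  moreover have "(s + 1/2) * (ln s - ln (real n)) \<le> \<theta> + 2"
  proof -
    have "ln (s / real n) \<le> s / real n - 1" using n1 assms by (intro ln_le_minus_one) simp
    then have "ln s - ln (real n) \<le> \<theta> / real n"
      using n1 assms by (simp add: ln_div \<theta>_def field_simps)
    then have "(s + 1/2) * (ln s - ln (real n)) \<le> (s + 1/2) * (\<theta> / real n)"
      using assms by (intro mult_left_mono) auto
    also have "\<dots> \<le> \<theta> + 2"
    proof -
      have "\<theta> * \<theta> \<le> 1 * 1" using \<theta> by (intro mult_mono) auto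
      then have "(real n + \<theta> + 1/2) * \<theta> \<le> (\<theta> + 2) * real n"
        using n1 \<theta> by (simp add: algebra_simps)
      then show ?thesis using n1 by (simp add: \<theta>_def field_simps)
    qed
    finally show ?thesis .
  qed
  ultimately show ?thesis by (simp add: \<theta>_def algebra_simps)
qed

lemma ln_le_half: assumes "(x::real) > 0" shows "ln x \<le> x / 2"
proof -
  have "ln 2 \<le> (1::real)" using ln_le_minus_one[of 2] by simp
  moreover have "ln (x / 2) \<le> x / 2 - 1" using assms by (intro ln_le_minus_one) simp
  ultimately show ?thesis using assms by (simp add: ln_div)
qed

lemma ln_powr_div_Gamma_le:
  assumes l: "(l::real) \<ge> 1" and s: "s \<ge> 1"
  shows "s * ln l - ln (Gamma (s + 1)) \<le> l - ln l / 2 + 3"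
proof -
  have ln2: "ln 2 \<le> (1::real)" using ln_le_minus_one[of 2] by simp
  have Stirling: "s * ln l - ln (Gamma (s + 1)) \<le> s * (ln l - ln s) + s - ln s / 2 + 3/2"
    using ln_Gamma_ge[OF s] by (simp add: algebra_simps)
  show ?thesis
  proof (cases "s \<ge> l / 4")
    case True
    have "ln (l / s) \<le> l / s - 1" using l s by (intro ln_le_minus_one) simp
    then have "s * (ln l - ln s) \<le> l - s"
      using l s mult_left_mono[of "ln (l / s)" "l / s - 1" s] by (simp add: ln_div field_simps)
    moreover have "ln (l / 4) \<le> ln s" using True l by simp
    then have "ln s \<ge> ln l - 2"
      using l ln2 ln_realpow[of 2 2] by (simp add: ln_div)
    ultimately show ?thesis using Stirling by linarith
  next
    case False
    have "ln (l / (2 * s)) \<le> l / (2 * s) - 1" using l s by (intro ln_le_minus_one) simp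
    then have "ln l - ln s \<le> ln 2 + l / (2 * s) - 1"
      using l s by (simp add: ln_div ln_mult_pos)
    then have "s * (ln l - ln s) \<le> s * (ln 2 + l / (2 * s) - 1)"
      using s by (intro mult_left_mono) auto
    also have "\<dots> \<le> l / 2" using ln2 s by (simp add: field_simps mult_left_le)
    finally show ?thesis
      using Stirling False ln_ge_zero[OF s] ln_le_half[of l] l by simp
  qed
qed

lemma powr_div_Gamma_le:
  assumes l: "(l::real) \<ge> 1" and s: "s > -1"
  shows "l powr s / Gamma (s + 1) \<le> 60 * exp l / sqrt l"
proof -
  have "s * ln l - ln (Gamma (s + 1)) \<le> l - ln l / 2 + 3"
  proof (cases "s \<le> 1")
    case True
    have "s * ln l \<le> 1 * ln l" using True l by (intro mult_right_mono) auto
    moreover have "ln (1/2) \<le> ln (Gamma (s + 1))"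
      using Gamma_ge_one_half[of "s + 1"] s by (subst ln_le_cancel_iff) auto
    moreover have "ln (1/2::real) \<ge> -1" using ln_le_minus_one[of 2] by (simp add: ln_div)
    ultimately show ?thesis using ln_le_half[of l] l by simp
  qed (use ln_powr_div_Gamma_le l in auto)
  moreover have "3 \<le> ln (60::real)"
  proof -
    have "exp (3::real) = exp 1 ^ 3" by (simp flip: exp_of_nat_mult)
    also have "\<dots> \<le> 3 ^ 3" using exp_le by (intro power_mono) auto
    finally show ?thesis by (simp add: ln_ge_iff)
  qed
  ultimately have "exp (s * ln l - ln (Gamma (s + 1))) \<le> exp (ln 60 + l - ln l / 2)"
    by simp
  moreover have "l powr s / Gamma (s + 1) = exp (s * ln l - ln (Gamma (s + 1)))"
    using l s Gamma_real_pos[of "s + 1"] by (simp add: powr_def exp_diff)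
  moreover have "60 * exp l / sqrt l = exp (ln 60 + l - ln l / 2)"
    using l by (simp add: exp_add exp_diff ln_sqrt[symmetric])
  ultimately show ?thesis by simp
qed

section \<open>The power series of \<open>I\<^sub>a\<close>\<close>

definition besselI_coeff :: "real \<Rightarrow> nat \<Rightarrow> real" where
  "besselI_coeff a m = 1 / (fact m * Gamma (real m + a + 1))"

definition besselI_series :: "real \<Rightarrow> real \<Rightarrow> real" where
  "besselI_series a u = (\<Sum>m. besselI_coeff a m * u ^ m)"

lemma besselI_coeff_pos: "a > -1 \<Longrightarrow> besselI_coeff a m > 0"
  unfolding besselI_coeff_def by (intro divide_pos_pos mult_pos_pos Gamma_real_pos) auto

lemma besselI_coeff_le: assumes "a > -1" shows "besselI_coeff a m \<le> 2 / fact m"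
proof -
  have "fact m * (1/2) \<le> fact m * Gamma (real m + a + 1)"
    using Gamma_ge_one_half[of "real m + a + 1"] assms by (intro mult_left_mono) auto
  then have "1 / (fact m * Gamma (real m + a + 1)) \<le> 1 / (fact m * (1/2))"
    using Gamma_real_pos[of "real m + a + 1"] assms by (intro divide_left_mono) auto
  then show ?thesis unfolding besselI_coeff_def by simp
qed

lemma besselI_series_term_le:
  assumes "a > -1" "u \<ge> 0"
  shows "besselI_coeff a m * u ^ m \<le> 2 * (u ^ m / fact m)"
  using mult_right_mono[OF besselI_coeff_le[OF assms(1)], of "u ^ m" m] assms(2) by simp

lemma summable_besselI_series: assumes "a > -1" shows "summable (\<lambda>m. besselI_coeff a m * u ^ m)"
proof (rule summable_comparison_test)
  show "summable (\<lambda>m. 2 * (\<bar>u\<bar> ^ m / fact m))"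
    using summable_exp[of "\<bar>u\<bar>"] by (intro summable_mult) (simp add: divide_inverse mult.commute)
  show "\<exists>N. \<forall>m\<ge>N. norm (besselI_coeff a m * u ^ m) \<le> 2 * (\<bar>u\<bar> ^ m / fact m)"
    using besselI_series_term_le[OF assms abs_ge_zero[of u]] besselI_coeff_pos[OF assms]
    by (simp add: abs_mult power_abs less_imp_le)
qed

lemma diffs_besselI_coeff: "diffs (besselI_coeff a) = besselI_coeff (a + 1)"
proof
  fix n
  have "real (Suc n) + a + 1 = real n + (a + 1) + 1" by simp
  then show "diffs (besselI_coeff a) n = besselI_coeff (a + 1) n"
    unfolding diffs_def besselI_coeff_def by (simp only: fact_Suc of_nat_mult) simp
qed

lemma has_real_derivative_besselI_series:
  assumes "a > -1"
  shows "(besselI_series a has_real_derivative besselI_series (a + 1) u) (at u)"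
  using termdiffs_strong_converges_everywhere[OF summable_besselI_series[OF assms]]
  unfolding besselI_series_def[abs_def] diffs_besselI_coeff by simp

lemma besselI_coeff_pred:
  assumes "a > 0"
  shows "besselI_coeff (a - 1) m = (real m + a) * besselI_coeff a m"
proof -
  have "Gamma (real m + a + 1) = (real m + a) * Gamma (real m + a)"
    using assms by (intro Gamma_plus1) (auto elim!: nonpos_Ints_cases)
  moreover have "real m + a \<noteq> 0" using assms by simp
  ultimately show ?thesis unfolding besselI_coeff_def by (simp add: add_ac)
qed

lemma besselI_series_recurrence:
  assumes "a > 0"
  shows "besselI_series (a - 1) u = a * besselI_series a u + u * besselI_series (a + 1) u"
proof -
  let ?c = "besselI_coeff"
  have "(\<lambda>k. u * (?c (a + 1) k * u ^ k)) sums (u * besselI_series (a + 1) u)"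
    unfolding besselI_series_def using summable_besselI_series[of "a + 1" u] assms
    by (intro sums_mult summable_sums) simp
  moreover have "u * (?c (a + 1) k * u ^ k) = real (Suc k) * ?c a (Suc k) * u ^ Suc k" for k
    using fun_cong[OF diffs_besselI_coeff[of a], of k] by (simp add: diffs_def)
  ultimately have "(\<lambda>m. real m * ?c a m * u ^ m) sums (u * besselI_series (a + 1) u)"
    using sums_Suc_iff[of "\<lambda>m. real m * ?c a m * u ^ m"] by simp
  moreover have "(\<lambda>m. a * (?c a m * u ^ m)) sums (a * besselI_series a u)"
    unfolding besselI_series_def using summable_besselI_series[of a u] assms
    by (intro sums_mult summable_sums) simp
  ultimately have "(\<lambda>m. a * (?c a m * u ^ m) + real m * ?c a m * u ^ m)
      sums (a * besselI_series a u + u * besselI_series (a + 1) u)"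
    by (intro sums_add)
  moreover have "a * (?c a m * u ^ m) + real m * ?c a m * u ^ m = ?c (a - 1) m * u ^ m" for m
    unfolding besselI_coeff_pred[OF assms] by (simp add: algebra_simps)
  ultimately show ?thesis unfolding besselI_series_def by (simp add: sums_iff)
qed

lemma besselI_summand_eq:
  assumes "w > 0"
  shows "(w / 2) powr (2 * real m + a) / (fact m * Gamma (real m + a + 1))
    = (w/2) powr a * (besselI_coeff a m * ((w/2)^2) ^ m)"
proof -
  have "(w/2) powr (2 * real m + a) = (w/2) powr (real (2*m)) * (w/2) powr a"
    by (simp add: powr_add)
  also have "(w/2) powr (real (2*m)) = ((w/2)^2) ^ m"
    using assms by (subst powr_realpow) (simp_all add: power_mult)
  finally show ?thesis unfolding besselI_coeff_def by simp
qed

lemma sums_besselI: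
  assumes "a > -1" "w > 0"
  shows "(\<lambda>m. (w / 2) powr (2 * real m + a) / (fact m * Gamma (real m + a + 1))) sums besselI a w"
  unfolding besselI_def besselI_summand_eq[OF assms(2)]
  by (intro summable_sums summable_mult summable_besselI_series assms)

lemma besselI_eq_series:
  assumes "a > -1" "w > 0"
  shows "besselI a w = (w/2) powr a * besselI_series a ((w/2)^2)"
  unfolding besselI_def besselI_series_def besselI_summand_eq[OF assms(2)]
  by (rule suminf_mult[OF summable_besselI_series[OF assms(1)]])

lemma besselI_nonneg:
  assumes "a > -1" "w > 0"
  shows "besselI a w \<ge> 0"
proof -
  have "besselI_series a u \<ge> 0" if "u \<ge> 0" for u
    unfolding besselI_series_def using besselI_coeff_pos[OF assms(1)] that
    by (intro suminf_nonneg summable_besselI_series assms) (simp add: less_imp_le)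
  then show ?thesis using besselI_eq_series[OF assms] by simp
qed

lemma has_real_derivative_besselI:
  assumes "a > 0" "w > 0"
  shows "(besselI a has_real_derivative besselI (a - 1) w - a / w * besselI a w) (at w)"
proof -
  define u where "u = (w/2)^2"
  have "((\<lambda>v. (v/2) powr a * besselI_series a ((v/2)^2)) has_real_derivative
      a * (w/2) powr (a - 1) * (1/2) * besselI_series a u
        + (w/2) powr a * (besselI_series (a + 1) u * (w/2))) (at w)"
    unfolding u_def using assms
    by (auto intro!: derivative_eq_intros DERIV_chain2[OF has_real_derivative_besselI_series])
  then have "(besselI a has_real_derivative
      a * (w/2) powr (a - 1) * (1/2) * besselI_series a u
        + (w/2) powr a * (besselI_series (a + 1) u * (w/2))) (at w)"
    by (rule has_field_derivative_transform_within_open[of _ _ _ "{0<..}"])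
      (use assms besselI_eq_series in auto)
  moreover have "a * (w/2) powr (a - 1) * (1/2) * besselI_series a u
        + (w/2) powr a * (besselI_series (a + 1) u * (w/2))
      = besselI (a - 1) w - a / w * besselI a w"
  proof -
    have pred_eq: "besselI (a - 1) w = (w/2) powr (a - 1) * besselI_series (a - 1) u"
      and eq: "besselI a w = (w/2) powr a * besselI_series a u"
      unfolding u_def using assms by (auto intro: besselI_eq_series)
    have powr_eq: "(w/2) powr a = (w/2) powr (a - 1) * (w/2)"
      using assms powr_add[of "w/2" "a - 1" 1] by simp
    show ?thesis
      unfolding pred_eq eq powr_eq besselI_series_recurrence[OF assms(1)] using assms
      by (simp add: field_simps u_def power2_eq_square)
  qed
  ultimately show ?thesis by simp
qed

section \<open>Size of \<open>I\<^sub>a\<close> and of \<open>I\<^sub>\<nu> - I\<^sub>\<nu>\<^sub>+\<^sub>1\<close>\<close>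

definition exp_term :: "real \<Rightarrow> nat \<Rightarrow> real" where
  "exp_term l m = l ^ m / fact m"

lemma exp_term_nonneg: "l \<ge> 0 \<Longrightarrow> exp_term l m \<ge> 0"
  by (simp add: exp_term_def)

lemma exp_term_Suc: "exp_term l (Suc m) = l / real (Suc m) * exp_term l m"
  unfolding exp_term_def by (simp add: field_simps del: of_nat_Suc)

lemma sums_exp_term: "exp_term l sums exp l"
  using exp_converges[of l] unfolding exp_term_def[abs_def] by (simp add: divide_inverse mult.commute)

lemma sums_mult_exp_term: "(\<lambda>m. real m * exp_term l m) sums (l * exp l)"
proof -
  have "(\<lambda>m. real (Suc m) * exp_term l (Suc m)) = (\<lambda>m. l * exp_term l m)"
    by (simp add: exp_term_Suc fun_eq_iff del: of_nat_Suc)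
  then have "(\<lambda>m. real (Suc m) * exp_term l (Suc m)) sums (l * exp l)"
    using sums_mult[OF sums_exp_term, of l] by simp
  then show ?thesis using sums_Suc_iff[of "\<lambda>m. real m * exp_term l m"] by simp
qed

lemma sums_mult_mult_exp_term: "(\<lambda>m. real m * (real m - 1) * exp_term l m) sums (l^2 * exp l)"
proof -
  have "real (i + 2) * (real (i + 2) - 1) * exp_term l (i + 2) = l^2 * exp_term l i" for i
  proof -
    have "exp_term l (i + 2) = l / real (Suc (Suc i)) * (l / real (Suc i) * exp_term l i)"
      using exp_term_Suc[of l "Suc i"] exp_term_Suc[of l i] by simp
    moreover have "real (i + 2) * (real (i + 2) - 1) = real (Suc (Suc i)) * real (Suc i)" by simp
    ultimately have "real (i + 2) * (real (i + 2) - 1) * exp_term l (i + 2)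
        = (real (Suc (Suc i)) * real (Suc i)) * (l / real (Suc (Suc i)) * (l / real (Suc i) * exp_term l i))"
      by simp
    also have "\<dots> = l^2 * exp_term l i" by (simp add: power2_eq_square del: of_nat_Suc)
    finally show ?thesis .
  qed
  then have "(\<lambda>i. real (i + 2) * (real (i + 2) - 1) * exp_term l (i + 2)) sums (l^2 * exp l)"
    using sums_mult[OF sums_exp_term, of "l^2"] by simp
  then show ?thesis
    using sums_iff_shift[of "\<lambda>m. real m * (real m - 1) * exp_term l m" 2] by (simp add: numeral_2_eq_2)
qed

lemma sums_exp_term_centered_square: "(\<lambda>m. exp_term l m * (real m - 1 - l)^2) sums ((l + 1) * exp l)"
proof -
  have "(\<lambda>m. real m * (real m - 1) * exp_term l m - (1 + 2*l) * (real m * exp_term l m)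
      + (1 + l)^2 * exp_term l m) sums (l^2 * exp l - (1 + 2*l) * (l * exp l) + (1 + l)^2 * exp l)"
    by (intro sums_add sums_diff sums_mult sums_mult_exp_term sums_mult_mult_exp_term sums_exp_term)
  moreover have "l^2 * exp l - (1 + 2*l) * (l * exp l) + (1 + l)^2 * exp l = (l + 1) * exp l"
    by (simp add: power2_eq_square algebra_simps)
  ultimately show ?thesis by (simp add: power2_eq_square algebra_simps)
qed

lemma besselI_series_le_exp:
  assumes "a > -1" "u \<ge> 0"
  shows "besselI_series a u \<le> 2 * exp u"
  unfolding besselI_series_def
  by (rule sums_le[OF _ summable_sums[OF summable_besselI_series[OF assms(1)]]
        sums_mult[OF sums_exp_term]])
    (use besselI_series_term_le[OF assms] in \<open>simp add: exp_term_def\<close>)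

lemma besselI_small_le:
  assumes "\<mu> > -1" "0 < l" "l \<le> 1"
  shows "besselI \<mu> (2 * l) \<le> 6 * l powr \<mu>"
proof -
  have "exp (l^2) \<le> exp 1" using assms by (simp add: power_le_one)
  then have "besselI_series \<mu> (l^2) \<le> 6"
    using besselI_series_le_exp[OF assms(1) zero_le_power2[of l]] exp_le by linarith
  then show ?thesis
    using besselI_eq_series[of \<mu> "2 * l"] assms by (simp add: mult_left_le)
qed

definition Gamma_term :: "real \<Rightarrow> real \<Rightarrow> nat \<Rightarrow> real" where
  "Gamma_term \<mu> l m = l powr (real m + \<mu>) / Gamma (real m + \<mu> + 1)"

lemma Gamma_term_nonneg: "\<mu> > -1 \<Longrightarrow> Gamma_term \<mu> l m \<ge> 0"
  unfolding Gamma_term_def by (intro divide_nonneg_pos) (auto intro!: Gamma_real_pos)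

lemma Gamma_term_le: "l \<ge> 1 \<Longrightarrow> \<mu> > -1 \<Longrightarrow> Gamma_term \<mu> l m \<le> 60 * exp l / sqrt l"
  unfolding Gamma_term_def by (rule powr_div_Gamma_le) auto

lemma Gamma_term_Suc:
  assumes "\<mu> > -1" "l > 0"
  shows "Gamma_term \<mu> l (Suc m) = l / (real m + \<mu> + 1) * Gamma_term \<mu> l m"
proof -
  have "Gamma (real m + \<mu> + 1 + 1) = (real m + \<mu> + 1) * Gamma (real m + \<mu> + 1)"
    using assms by (intro Gamma_plus1) (auto elim!: nonpos_Ints_cases)
  moreover have "l powr (real m + \<mu> + 1) = l * l powr (real m + \<mu>)"
    using assms powr_add[of l "real m + \<mu>" 1] by simp
  ultimately show ?thesis unfolding Gamma_term_def by (simp add: add_ac)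
qed

lemma Gamma_term_shift: "Gamma_term (\<mu> + 1) l m = Gamma_term \<mu> l (Suc m)"
  unfolding Gamma_term_def by (simp add: add_ac)

lemma besselI_sums_exp_term_Gamma_term:
  assumes "\<mu> > -1" "l > 0"
  shows "(\<lambda>m. exp_term l m * Gamma_term \<mu> l m) sums besselI \<mu> (2 * l)"
proof -
  have "l powr (2 * real m + \<mu>) / (fact m * Gamma (real m + \<mu> + 1))
      = exp_term l m * Gamma_term \<mu> l m" for m
  proof -
    have "l powr (2 * real m + \<mu>) = l powr (real m) * l powr (real m + \<mu>)"
      by (simp add: powr_add[symmetric])
    then show ?thesis
      using assms unfolding exp_term_def Gamma_term_def by (simp add: powr_realpow)
  qed
  then show ?thesis using sums_besselI[of \<mu> "2 * l"] assms by simp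
qed

lemma besselI_large_le:
  assumes "l \<ge> 1" "\<mu> > -1"
  shows "besselI \<mu> (2 * l) \<le> 60 * exp l / sqrt l * exp l"
proof (rule sums_le[OF _ besselI_sums_exp_term_Gamma_term[OF assms(2)] sums_mult[OF sums_exp_term]])
  show "exp_term l m * Gamma_term \<mu> l m \<le> 60 * exp l / sqrt l * exp_term l m" for m
    using mult_left_mono[OF Gamma_term_le[OF assms], of "exp_term l m" m] exp_term_nonneg[of l m] assms
    by (simp add: mult.commute)
qed (use assms in simp)

definition besselI_second_diff :: "real \<Rightarrow> real \<Rightarrow> nat \<Rightarrow> real" where
  "besselI_second_diff \<nu> l m = exp_term l m * Gamma_term \<nu> l m
     - 2 * (exp_term l m * Gamma_term \<nu> l (Suc m)) + exp_term l (Suc m) * Gamma_term \<nu> l (Suc m)"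

lemma sums_besselI_second_diff:
  assumes "\<nu> > -1" "l > 0"
  shows "besselI_second_diff \<nu> l sums
    (2 * besselI \<nu> (2 * l) - 2 * besselI (\<nu> + 1) (2 * l) - Gamma_term \<nu> l 0)"
proof -
  note sums = besselI_sums_exp_term_Gamma_term[OF assms]
  have "(\<lambda>m. exp_term l m * Gamma_term \<nu> l (Suc m)) sums besselI (\<nu> + 1) (2 * l)"
    using besselI_sums_exp_term_Gamma_term[of "\<nu> + 1" l] assms by (simp add: Gamma_term_shift)
  moreover have "(\<lambda>m. exp_term l (Suc m) * Gamma_term \<nu> l (Suc m))
      sums (besselI \<nu> (2 * l) - Gamma_term \<nu> l 0)"
    using sums_Suc_iff[of "\<lambda>m. exp_term l m * Gamma_term \<nu> l m"] sums
    by (simp add: exp_term_def)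
  ultimately have "besselI_second_diff \<nu> l sums
      (besselI \<nu> (2 * l) - 2 * besselI (\<nu> + 1) (2 * l) + (besselI \<nu> (2 * l) - Gamma_term \<nu> l 0))"
    unfolding besselI_second_diff_def[abs_def] using sums by (intro sums_add sums_diff sums_mult)
  then show ?thesis by (simp add: algebra_simps)
qed

lemma besselI_second_diff_eq:
  assumes "\<nu> > -1" "l > 0"
  shows "besselI_second_diff \<nu> l m = exp_term l m * Gamma_term \<nu> l m
    * ((real m + 1 - l)^2 + \<nu> * (real m + 1)) / ((real m + 1) * (real m + \<nu> + 1))"
proof -
  have "a * b - 2 * (a * (l / (D + \<nu>) * b)) + l / D * a * (l / (D + \<nu>) * b)
      = a * b * ((D - l)^2 + \<nu> * D) / (D * (D + \<nu>))"
    if "D \<noteq> 0" "D + \<nu> \<noteq> 0" for a b D :: real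
    using that by (simp add: divide_simps power2_eq_square) algebra
  from this[of "real m + 1"] assms show ?thesis
    unfolding besselI_second_diff_def exp_term_Suc Gamma_term_Suc[OF assms]
    by (simp add: add_ac)
qed

lemma exp_term_centered_div_le:
  assumes "l > 0"
  shows "exp_term l m * ((real m + 1 - l)^2 + \<bar>\<nu>\<bar> * (real m + 1)) / (real m + 1)^2
    \<le> 2 / l^2 * (exp_term l (m + 2) * (real (m + 2) - 1 - l)^2) + \<bar>\<nu>\<bar> / l * exp_term l (Suc m)"
proof -
  define k where "k = real m"
  define a where "a = exp_term l m"
  have k: "k \<ge> 0" by (simp add: k_def)
  have a: "a \<ge> 0" using assms by (simp add: a_def exp_term_nonneg)
  have a_Suc: "exp_term l (Suc m) = l / (k + 1) * a"
    by (simp add: exp_term_Suc a_def k_def)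
  have a_Suc_Suc: "exp_term l (m + 2) = l / (k + 2) * (l / (k + 1) * a)"
    using exp_term_Suc[of l "Suc m"] a_Suc by (simp add: k_def)
  have "a * (k + 1 - l)^2 / (k + 1)^2 = 2 * a * (k + 1 - l)^2 / (2 * (k + 1)^2)"
    by simp
  also have "\<dots> \<le> 2 * a * (k + 1 - l)^2 / ((k + 1) * (k + 2))"
  proof (rule divide_left_mono)
    show "(k + 1) * (k + 2) \<le> 2 * (k + 1)^2"
      using k mult_nonneg_nonneg[OF k k] by (simp add: power2_eq_square algebra_simps)
  qed (use k a in simp_all)
  also have "\<dots> = 2 / l^2 * (l / (k + 2) * (l / (k + 1) * a) * (k + 1 - l)^2)"
  proof -
    have "2 * a * Y / (D1 * D2) = 2 / l^2 * (l / D2 * (l / D1 * a) * Y)"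
      if "D1 \<noteq> 0" "D2 \<noteq> 0" for D1 D2 Y :: real
      using that assms by (simp add: field_simps power2_eq_square)
    from this[of "k + 1" "k + 2"] k show ?thesis by simp
  qed
  also have "\<dots> = 2 / l^2 * (exp_term l (m + 2) * (real (m + 2) - 1 - l)^2)"
    unfolding a_Suc_Suc by (simp add: k_def add_ac)
  finally have "a * (k + 1 - l)^2 / (k + 1)^2 \<le> 2 / l^2 * (exp_term l (m + 2) * (real (m + 2) - 1 - l)^2)" .
  moreover have "a * \<bar>\<nu>\<bar> / (k + 1) = \<bar>\<nu>\<bar> / l * exp_term l (Suc m)"
    unfolding a_Suc using assms k by (simp add: field_simps)
  moreover have "a * ((k + 1 - l)^2 + \<bar>\<nu>\<bar> * (k + 1)) / (k + 1)^2
      = a * (k + 1 - l)^2 / (k + 1)^2 + a * \<bar>\<nu>\<bar> / (k + 1)"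
  proof -
    have "a * (Y + n * D) / D^2 = a * Y / D^2 + a * n / D" if "D \<noteq> 0" for Y n D :: real
      using that by (simp add: field_simps power2_eq_square)
    from this[of "k + 1"] k show ?thesis by simp
  qed
  ultimately show ?thesis by (simp add: a_def k_def)
qed

lemma abs_besselI_second_diff_le:
  assumes "\<nu> > -1" "l > 0"
  shows "\<bar>besselI_second_diff \<nu> l m\<bar> \<le> Gamma_term \<nu> l m / min 1 (\<nu> + 1)
    * (2 / l^2 * (exp_term l (m + 2) * (real (m + 2) - 1 - l)^2) + \<bar>\<nu>\<bar> / l * exp_term l (Suc m))"
proof -
  define k where "k = real m"
  define c where "c = min 1 (\<nu> + 1)"
  define a where "a = exp_term l m"
  define b where "b = Gamma_term \<nu> l m"
  have k: "k \<ge> 0" by (simp add: k_def)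
  have c: "c > 0" using assms by (simp add: c_def)
  have a: "a \<ge> 0" and b: "b \<ge> 0"
    using assms by (simp_all add: a_def b_def exp_term_nonneg Gamma_term_nonneg)
  then have ab: "a * b \<ge> 0" by simp
  define N where "N = (k + 1 - l)^2 + \<nu> * (k + 1)"
  define X where "X = (k + 1 - l)^2 + \<bar>\<nu>\<bar> * (k + 1)"
  have "\<bar>N\<bar> \<le> X"
    using k by (auto simp: N_def X_def abs_mult intro!: order.trans[OF abs_triangle_ineq])
  have "c * (k + 1)^2 \<le> (k + 1) * (k + \<nu> + 1)"
  proof -
    have "c * (k + 1) \<le> k + \<nu> + 1"
      using k assms mult_nonpos_nonneg[of \<nu> k] by (cases "\<nu> \<ge> 0") (auto simp: c_def algebra_simps)
    then show ?thesis
      using mult_left_mono[of "c * (k + 1)" "k + \<nu> + 1" "k + 1"] k by (simp add: power2_eq_square mult_ac)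
  qed
  have "\<bar>besselI_second_diff \<nu> l m\<bar> = a * b * \<bar>N\<bar> / ((k + 1) * (k + \<nu> + 1))"
    unfolding besselI_second_diff_eq[OF assms] using a b k assms
    by (simp add: a_def b_def k_def N_def abs_mult abs_divide)
  also have "\<dots> \<le> a * b * X / ((k + 1) * (k + \<nu> + 1))"
    using \<open>\<bar>N\<bar> \<le> X\<close> ab k assms by (intro divide_right_mono mult_left_mono) auto
  also have "\<dots> \<le> a * b * X / (c * (k + 1)^2)"
    using \<open>c * (k + 1)^2 \<le> _\<close> \<open>\<bar>N\<bar> \<le> X\<close> a b k c assms
    by (intro divide_left_mono mult_nonneg_nonneg mult_pos_pos) auto
  also have "\<dots> = b / c * (a * ((k + 1 - l)^2 + \<bar>\<nu>\<bar> * (k + 1)) / (k + 1)^2)"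
    by (simp add: X_def field_simps)
  also have "\<dots> \<le> b / c * (2 / l^2 * (exp_term l (m + 2) * (real (m + 2) - 1 - l)^2)
      + \<bar>\<nu>\<bar> / l * exp_term l (Suc m))"
    using exp_term_centered_div_le[OF assms(2), of m \<nu>] c assms
    by (intro mult_left_mono) (auto simp: a_def b_def k_def Gamma_term_nonneg)
  finally show ?thesis by (simp add: b_def c_def)
qed

lemma sums_exp_term_majorant:
  assumes "l \<ge> 1"
  obtains S where
    "(\<lambda>m. 2 / l^2 * (exp_term l (m + 2) * (real (m + 2) - 1 - l)^2) + \<bar>\<nu>\<bar> / l * exp_term l (Suc m)) sums S"
    "S \<le> (4 + \<bar>\<nu>\<bar>) * exp l / l"
proof -
  define F where "F i = exp_term l i * (real i - 1 - l)^2" for i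
  define V where "V = (l + 1) * exp l - (\<Sum>i<2. F i)"
  define W where "W = exp l - exp_term l 0"
  have "(\<lambda>i. F (i + 2)) sums V"
    unfolding V_def F_def using sums_exp_term_centered_square[of l]
    by (subst sums_iff_shift) simp
  moreover have "(\<lambda>m. exp_term l (Suc m)) sums W"
    unfolding W_def using sums_Suc_iff[of "exp_term l"] sums_exp_term[of l] by simp
  ultimately have "(\<lambda>m. 2 / l^2 * F (m + 2) + \<bar>\<nu>\<bar> / l * exp_term l (Suc m)) sums (2 / l^2 * V + \<bar>\<nu>\<bar> / l * W)"
    by (intro sums_add sums_mult)
  moreover have "2 / l^2 * V + \<bar>\<nu>\<bar> / l * W \<le> (4 + \<bar>\<nu>\<bar>) * exp l / l"
  proof -
    have "V \<le> (l + 1) * exp l"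
      unfolding V_def F_def using assms by (simp add: exp_term_nonneg sum_nonneg)
    then have "2 / l^2 * V \<le> 2 / l^2 * ((l + 1) * exp l)" by (intro mult_left_mono) auto
    also have "\<dots> \<le> 4 * exp l / l"
      using assms by (simp add: field_simps power2_eq_square)
    finally have "2 / l^2 * V \<le> 4 * exp l / l" .
    moreover have "\<bar>\<nu>\<bar> / l * W \<le> \<bar>\<nu>\<bar> / l * exp l"
      unfolding W_def using assms by (intro mult_left_mono) (auto simp: exp_term_def)
    ultimately show ?thesis by (simp add: add_divide_distrib distrib_right)
  qed
  ultimately show ?thesis using that unfolding F_def by blast
qed

definition besselI_diff_const :: "real \<Rightarrow> real" where
  "besselI_diff_const \<nu> = 30 * ((4 + \<bar>\<nu>\<bar>) / min 1 (\<nu> + 1) + 1)"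

lemma besselI_diff_const_pos: "\<nu> > -1 \<Longrightarrow> besselI_diff_const \<nu> > 0"
  unfolding besselI_diff_const_def by (intro mult_pos_pos add_nonneg_pos divide_nonneg_pos) auto

lemma besselI_diff_large_le:
  assumes l: "l \<ge> 1" and \<nu>: "\<nu> > -1"
  shows "\<bar>besselI \<nu> (2 * l) - besselI (\<nu> + 1) (2 * l)\<bar>
    \<le> besselI_diff_const \<nu> * exp l * exp l / (l * sqrt l)"
proof -
  define c where "c = min 1 (\<nu> + 1)"
  define M where "M = 60 * exp l / sqrt l"
  have c: "c > 0" using \<nu> by (simp add: c_def)
  have M: "M \<ge> 0" using l by (simp add: M_def)
  obtain S where S: "(\<lambda>m. 2 / l^2 * (exp_term l (m + 2) * (real (m + 2) - 1 - l)^2)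
      + \<bar>\<nu>\<bar> / l * exp_term l (Suc m)) sums S" and S_le: "S \<le> (4 + \<bar>\<nu>\<bar>) * exp l / l"
    using sums_exp_term_majorant[OF l] by blast
  have "\<bar>besselI_second_diff \<nu> l m\<bar> \<le> M / c * (2 / l^2 * (exp_term l (m + 2) * (real (m + 2) - 1 - l)^2)
      + \<bar>\<nu>\<bar> / l * exp_term l (Suc m))" for m
  proof -
    let ?G = "2 / l^2 * (exp_term l (m + 2) * (real (m + 2) - 1 - l)^2) + \<bar>\<nu>\<bar> / l * exp_term l (Suc m)"
    have "\<bar>besselI_second_diff \<nu> l m\<bar> \<le> Gamma_term \<nu> l m / c * ?G"
      using abs_besselI_second_diff_le[OF \<nu>, of l m] l by (simp add: c_def)
    also have "\<dots> \<le> M / c * ?G"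
      using Gamma_term_le[OF l \<nu>, of m] c l
      by (intro mult_right_mono divide_right_mono) (auto simp: M_def exp_term_nonneg)
    finally show ?thesis .
  qed
  then have "\<bar>2 * besselI \<nu> (2 * l) - 2 * besselI (\<nu> + 1) (2 * l) - Gamma_term \<nu> l 0\<bar> \<le> M / c * S"
    using norm_sums_le[OF sums_besselI_second_diff[OF \<nu>, of l] sums_mult[OF S, of "M / c"]] l
    by simp
  moreover have "0 \<le> Gamma_term \<nu> l 0" "Gamma_term \<nu> l 0 \<le> M"
    using Gamma_term_nonneg[OF \<nu>] Gamma_term_le[OF l \<nu>] by (simp_all add: M_def)
  ultimately have "\<bar>besselI \<nu> (2 * l) - besselI (\<nu> + 1) (2 * l)\<bar> \<le> (M / c * S + M) / 2"
    unfolding abs_le_iff by auto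
  also have "\<dots> \<le> (M / c * ((4 + \<bar>\<nu>\<bar>) * exp l / l) + M * exp l / l) / 2"
  proof -
    have "l \<le> exp l" using exp_ge_add_one_self[of l] by linarith
    then have "M \<le> M * exp l / l" using l M by (simp add: field_simps mult_left_mono)
    then show ?thesis using S_le c M by (intro divide_right_mono add_mono mult_left_mono) auto
  qed
  also have "\<dots> = 30 * ((4 + \<bar>\<nu>\<bar>) / c + 1) * exp l * exp l / (l * sqrt l)"
    unfolding M_def using l c by (simp add: field_simps)
  finally show ?thesis unfolding c_def besselI_diff_const_def .
qed

section \<open>The kernel \<open>\<delta>*p\<^sub>t\<^sup>\<nu>\<^sup>+\<^sup>1\<close>\<close>

lemma has_real_derivative_besselI_scaled:
  assumes "a > 0" "c > 0" "x > 0"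
  shows "((\<lambda>z. besselI a (c * z)) has_real_derivative
    (besselI (a - 1) (c * x) - a / (c * x) * besselI a (c * x)) * c) (at x)"
proof (rule DERIV_chain2[of "besselI a"])
  show "(besselI a has_real_derivative besselI (a - 1) (c * x) - a / (c * x) * besselI a (c * x)) (at (c * x))"
    using assms by (intro has_real_derivative_besselI) auto
qed (auto intro!: derivative_eq_intros)

lemma delta_star_laguerre_heat_kernel:
  assumes \<nu>: "\<nu> > -1" and t: "t > 0" and x: "x > 0" and y: "y > 0"
  defines "\<rho> \<equiv> exp (-2 * t)"
  defines "d \<equiv> 1 - \<rho>^2"
  shows "delta_star \<nu> (\<lambda>z. laguerre_heat_kernel (\<nu> + 1) t z y) x
    = (2 / d) * (2 * \<rho> * sqrt (x * y) / d) * exp (- (1/2) * ((1 + \<rho>^2) / d) * (x^2 + y^2))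
      * (x * besselI (\<nu> + 1) (2 * \<rho> / d * x * y) - \<rho> * y * besselI \<nu> (2 * \<rho> / d * x * y))"
proof -
  define q where "q = 2 * \<rho> / d"
  define \<alpha> where "\<alpha> = (1 + \<rho>^2) / d"
  define P where "P z = 2 * \<rho> * sqrt (z * y) / d" for z
  define E where "E z = exp (- (1/2) * \<alpha> * (z^2 + y^2))" for z
  define B where "B z = besselI (\<nu> + 1) (q * z * y)" for z
  have \<rho>: "0 < \<rho>" "\<rho> < 1" using t by (auto simp: \<rho>_def)
  have d: "d > 0" using \<rho> by (simp add: d_def power_less_one_iff)
  have q: "q > 0" using \<rho> d by (simp add: q_def)
  have "exp (-4 * t) = \<rho>^2"
    by (simp add: \<rho>_def power2_eq_square flip: exp_add)
  then have kernel: "(\<lambda>z. laguerre_heat_kernel (\<nu> + 1) t z y) = (\<lambda>z. P z * E z * B z)"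
    using \<rho> unfolding laguerre_heat_kernel_def Let_def P_def E_def B_def q_def \<alpha>_def d_def
    by (simp add: real_sqrt_mult mult_ac)
  have "(P has_real_derivative P x / (2 * x)) (at x)"
    unfolding P_def[abs_def] using x y d \<rho>
    by (auto intro!: derivative_eq_intros simp: real_sqrt_mult field_simps)
  moreover have "(E has_real_derivative E x * (- \<alpha> * x)) (at x)"
    unfolding E_def[abs_def] by (auto intro!: derivative_eq_intros simp: power2_eq_square)
  moreover have "(B has_real_derivative
      (besselI \<nu> (q * x * y) - (\<nu> + 1) / (q * x * y) * B x) * (q * y)) (at x)"
    using has_real_derivative_besselI_scaled[of "\<nu> + 1" "q * y" x] \<nu> q x y
    by (simp add: B_def[abs_def] mult_ac)
  ultimately have deriv_eq: "deriv (\<lambda>z. P z * E z * B z) x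
      = P x / (2 * x) * E x * B x + P x * (E x * (- \<alpha> * x)) * B x
        + P x * E x * ((besselI \<nu> (q * x * y) - (\<nu> + 1) / (q * x * y) * B x) * (q * y))"
    by (intro DERIV_imp_deriv) (auto intro!: derivative_eq_intros simp: algebra_simps)
  have "delta_star \<nu> (\<lambda>z. P z * E z * B z) x
      = (\<alpha> + 1) * x * P x * E x * B x - q * y * P x * E x * besselI \<nu> (q * x * y)"
    unfolding delta_star_def deriv_eq using x y q by (simp add: field_simps)
  also have "\<dots> = (2 / d) * P x * E x * (x * B x - \<rho> * y * besselI \<nu> (q * x * y))"
  proof -
    have "\<alpha> + 1 = 2 / d" using d by (simp add: \<alpha>_def d_def field_simps)
    then show ?thesis by (simp add: q_def algebra_simps)
  qed
  finally show ?thesis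
    unfolding kernel P_def E_def B_def q_def \<alpha>_def by simp
qed

section \<open>Gaussian estimates\<close>

lemma mult_exp_neg_square_le:
  assumes "a > 0"
  shows "v * exp (- (v^2) / (4 * a)) \<le> 2 * sqrt a"
proof -
  define u where "u = v / (2 * sqrt a)"
  have v: "v = 2 * sqrt a * u" using assms by (simp add: u_def)
  have "0 \<le> (u - 1/2)^2" by simp
  then have "u \<le> 1 + u^2" by (simp add: power2_eq_square algebra_simps)
  then have "u \<le> exp (u^2)" using exp_ge_add_one_self[of "u^2"] by linarith
  then have "u * exp (- (u^2)) \<le> 1" by (simp add: exp_minus field_simps)
  moreover have "v * exp (- (v^2) / (4 * a)) = 2 * sqrt a * (u * exp (- (u^2)))"
    using assms by (simp add: v power_mult_distrib)
  ultimately show ?thesis using assms by simp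
qed

lemma exp_neg_square_div_le_sqrt:
  assumes "0 < \<rho>" "\<rho> \<le> 1"
  shows "exp (- ((1 - \<rho>)^2 / (2 * \<rho>))) \<le> 2 * sqrt \<rho>"
proof (cases "\<rho> \<ge> 1/4")
  case True
  then have "1/2 \<le> sqrt \<rho>" using real_sqrt_le_mono[OF True] by (simp add: real_sqrt_divide)
  moreover have "exp (- ((1 - \<rho>)^2 / (2 * \<rho>))) \<le> 1" using assms by simp
  ultimately show ?thesis by linarith
next
  case False
  define v where "v = (1 - \<rho>)^2 / (2 * \<rho>)"
  have "(3/4)^2 \<le> (1 - \<rho>)^2" using False by (intro power_mono) auto
  then have "9 / (32 * \<rho>) \<le> 1 + v" using assms by (simp add: v_def field_simps)
  moreover have "exp (- v) * (1 + v) \<le> 1"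
    using exp_ge_add_one_self[of v] by (simp add: exp_minus field_simps)
  ultimately have "exp (- v) * (9 / (32 * \<rho>)) \<le> 1"
    using mult_left_mono[of "9 / (32 * \<rho>)" "1 + v" "exp (- v)"] by simp
  then have "exp (- v) \<le> 32 * \<rho> / 9"
    using assms by (simp add: field_simps)
  also have "\<dots> \<le> 2 * sqrt \<rho>"
  proof -
    have "sqrt \<rho> \<le> 1/2" using False real_sqrt_le_mono[of \<rho> "1/4"] by (simp add: real_sqrt_divide)
    then have "sqrt \<rho> * sqrt \<rho> \<le> sqrt \<rho> * (1/2)" using assms by (intro mult_left_mono) auto
    then show ?thesis using assms by simp
  qed
  finally show ?thesis by (simp add: v_def)
qed

lemma powr_le_one_plus:
  assumes "(a::real) \<ge> 0" "0 \<le> g" "g \<le> 1"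
  shows "a powr g \<le> 1 + a"
proof (cases "a \<le> 1")
  case True
  then show ?thesis using assms powr_le1[of g a] by simp
next
  case False
  then show ?thesis using assms powr_mono[of g 1 a] by simp
qed

lemma exp_gauss_le:
  fixes x y k d :: real
  assumes "d > 0" "k \<ge> 1"
  shows "exp (- (1/2) * (k / d) * (x^2 + y^2)) \<le> exp (- ((x - y)^2) / (8 * d)) * exp (- (x^2) / (4 * d))"
proof -
  have "4 * (x^2 + y^2) - ((x - y)^2 + 2 * x^2) = (x + y)^2 + 2 * y^2"
    by (simp add: power2_eq_square algebra_simps)
  then have "(x - y)^2 / 8 + x^2 / 4 \<le> (x^2 + y^2) / 2"
    using zero_le_power2[of "x + y"] zero_le_power2[of y] by linarith
  also have "\<dots> \<le> k * (x^2 + y^2) / 2"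
    using mult_right_mono[OF assms(2), of "x^2 + y^2"] by simp
  finally have "(x - y)^2 / 8 + x^2 / 4 \<le> k * (x^2 + y^2) / 2" .
  then have "- (k * (x^2 + y^2) / 2) / d \<le> - ((x - y)^2 / 8 + x^2 / 4) / d"
    using assms by (intro divide_right_mono) auto
  then have "- (1/2) * (k / d) * (x^2 + y^2) \<le> - ((x - y)^2 / 8 + x^2 / 4) / d"
    by (simp add: field_simps)
  also have "\<dots> = - ((x - y)^2) / (8 * d) + - (x^2) / (4 * d)"
    using assms by (simp add: field_simps)
  finally show ?thesis by (simp flip: exp_add)
qed

lemma exp_gauss_le_self:
  fixes x y k d :: real
  assumes "d > 0" "k \<ge> 1"
  shows "exp (- (1/2) * (k / d) * (x^2 + y^2)) \<le> exp (- ((x - y)^2) / (8 * d))"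
proof -
  have "exp (- (1/2) * (k / d) * (x^2 + y^2)) \<le> exp (- ((x - y)^2) / (8 * d)) * exp (- (x^2) / (4 * d))"
    by (rule exp_gauss_le[OF assms])
  also have "\<dots> \<le> exp (- ((x - y)^2) / (8 * d))" using assms by (intro mult_left_le) auto
  finally show ?thesis .
qed

lemma exp_gauss_mult_le:
  fixes x y k d :: real
  assumes "d > 0" "k \<ge> 1"
  shows "x * exp (- (1/2) * (k / d) * (x^2 + y^2)) \<le> 2 * sqrt d * exp (- ((x - y)^2) / (8 * d))"
proof (cases "x \<ge> 0")
  case True
  then have "x * exp (- (1/2) * (k / d) * (x^2 + y^2))
      \<le> exp (- ((x - y)^2) / (8 * d)) * (x * exp (- (x^2) / (4 * d)))"
    using exp_gauss_le[OF assms, of x y] by (simp add: mult_left_mono mult_ac)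
  also have "\<dots> \<le> exp (- ((x - y)^2) / (8 * d)) * (2 * sqrt d)"
    using mult_exp_neg_square_le[OF assms(1), of x] by (intro mult_left_mono) auto
  finally show ?thesis by (simp add: mult_ac)
next
  case False
  then have "x * exp (- (1/2) * (k / d) * (x^2 + y^2)) \<le> 0"
    by (intro mult_nonpos_nonneg) auto
  moreover have "0 \<le> 2 * sqrt d * exp (- ((x - y)^2) / (8 * d))" using assms by simp
  ultimately show ?thesis by linarith
qed

section \<open>The bound in terms of \<open>\<rho>\<close> and \<open>d\<close>\<close>

lemma gamma_exp_nonneg: "gamma_exp \<nu> \<ge> 0"
  by (simp add: gamma_exp_def)

lemma one_le_powr_gamma_exp: "a \<ge> 0 \<Longrightarrow> 1 \<le> (1 + a) powr gamma_exp \<nu>"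
  using gamma_exp_nonneg[of \<nu>] by (simp add: ge_one_powr_ge_zero)

lemma sqrt_mult_besselI_small_le:
  assumes "\<mu> \<ge> -1/2" "0 < l" "l \<le> 1"
  shows "sqrt l * besselI \<mu> (2 * l) \<le> 6"
proof -
  have "sqrt l * besselI \<mu> (2 * l) \<le> sqrt l * (6 * l powr \<mu>)"
    using besselI_small_le[of \<mu> l] assms by (intro mult_left_mono) auto
  also have "\<dots> = 6 * l powr (\<mu> + 1/2)"
    using assms by (simp add: powr_half_sqrt[symmetric] powr_add)
  also have "\<dots> \<le> 6" using assms powr_le1[of "\<mu> + 1/2" l] by simp
  finally show ?thesis .
qed

text \<open>Writing \<open>1/l = (\<surd>d/x)(\<surd>d/y)/\<rho>\<close> distributes the exponent \<open>\<gamma>\<^sub>\<nu> \<le> 1/2\<close> over the three factors.\<close>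
lemma powr_half_le_gamma_exp:
  assumes \<nu>: "-1 < \<nu>" "\<nu> < -1/2" and \<rho>: "0 < \<rho>" "\<rho> \<le> 1" and d: "d > 0"
    and x: "x > 0" and y: "y > 0" and l: "l = \<rho> * x * y / d"
  shows "l powr (\<nu> + 1/2) \<le> (1 + sqrt d / x) powr gamma_exp \<nu> * (1 + sqrt d / y) / sqrt \<rho>"
proof -
  define g where "g = gamma_exp \<nu>"
  have g: "g = - 1/2 - \<nu>" "0 < g" "g \<le> 1/2" using \<nu> by (auto simp: g_def gamma_exp_def)
  have l0: "l > 0" using l \<rho> x y d by simp
  have "1 / l = (sqrt d / x) * (sqrt d / y) * (1 / \<rho>)"
    using l l0 \<rho> d x y by (simp add: field_simps)
  moreover have "\<nu> + 1/2 = - g" using g(1) by simp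
  then have "l powr (\<nu> + 1/2) = (1 / l) powr g"
    by (simp add: powr_minus_divide powr_divide)
  ultimately have "l powr (\<nu> + 1/2) = (sqrt d / x) powr g * (sqrt d / y) powr g * (1 / \<rho>) powr g"
    by (simp only: powr_mult)
  also have "\<dots> \<le> (1 + sqrt d / x) powr g * (1 + sqrt d / y) * (1 / sqrt \<rho>)"
  proof (intro mult_mono)
    show "(sqrt d / x) powr g \<le> (1 + sqrt d / x) powr g" using g x d by (intro powr_mono2) auto
    show "(sqrt d / y) powr g \<le> 1 + sqrt d / y" using g y d by (intro powr_le_one_plus) auto
    have "(1 / \<rho>) powr g \<le> (1 / \<rho>) powr (1/2)" using g \<rho> by (intro powr_mono) auto
    then show "(1 / \<rho>) powr g \<le> 1 / sqrt \<rho>" using \<rho> by (simp add: powr_half_sqrt real_sqrt_divide)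
  qed (use x y d in auto)
  finally show ?thesis by (simp add: g_def)
qed

lemma sqrt_mult_besselI_small_le_gamma_exp:
  assumes \<nu>: "-1 < \<nu>" and \<rho>: "0 < \<rho>" "\<rho> \<le> 1" and d: "d > 0"
    and x: "x > 0" and y: "y > 0" and l: "l = \<rho> * x * y / d" "l \<le> 1"
  shows "sqrt l * besselI \<nu> (2 * l)
    \<le> 6 * (1 + sqrt d / x) powr gamma_exp \<nu> * (1 + sqrt d / y) / sqrt \<rho>"
proof -
  have l0: "l > 0" using l \<rho> x y d by simp
  show ?thesis
  proof (cases "\<nu> \<ge> -1/2")
    case True
    have "1 * 1 \<le> (1 + sqrt d / x) powr gamma_exp \<nu> * (1 + sqrt d / y)"
      using d x y by (intro mult_mono one_le_powr_gamma_exp) auto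
    moreover have "sqrt \<rho> \<le> 1" using \<rho> by simp
    ultimately have "sqrt \<rho> \<le> (1 + sqrt d / x) powr gamma_exp \<nu> * (1 + sqrt d / y)" by linarith
    then have "1 \<le> (1 + sqrt d / x) powr gamma_exp \<nu> * (1 + sqrt d / y) / sqrt \<rho>"
      using \<rho> by (simp add: le_divide_eq)
    then show ?thesis using sqrt_mult_besselI_small_le[OF True l0 l(2)] by simp
  next
    case False
    have "sqrt l * besselI \<nu> (2 * l) \<le> sqrt l * (6 * l powr \<nu>)"
      using besselI_small_le[of \<nu> l] \<nu> l l0 by (intro mult_left_mono) auto
    also have "\<dots> = 6 * l powr (\<nu> + 1/2)"
      using l0 by (simp add: powr_half_sqrt[symmetric] powr_add)
    also have "\<dots> \<le> 6 * ((1 + sqrt d / x) powr gamma_exp \<nu> * (1 + sqrt d / y) / sqrt \<rho>)"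
      using powr_half_le_gamma_exp[OF \<nu> _ \<rho> d x y l(1)] False by simp
    finally show ?thesis by simp
  qed
qed

lemma bessel_combination_le_of_le_one:
  assumes \<nu>: "\<nu> > -1" and \<rho>: "0 < \<rho>" "\<rho> < 1" and d: "d = 1 - \<rho>^2"
    and x: "x > 0" and y: "y > 0" and l: "l = \<rho> * x * y / d" "l \<le> 1"
  shows "sqrt l * exp (- (1/2) * ((1 + \<rho>^2) / d) * (x^2 + y^2))
      * \<bar>x * besselI (\<nu> + 1) (2 * l) - \<rho> * y * besselI \<nu> (2 * l)\<bar>
    \<le> 30 * sqrt d * exp (- ((x - y)^2) / (8 * d)) * (1 + sqrt d / x) powr gamma_exp \<nu>"
proof -
  define E where "E = exp (- (1/2) * ((1 + \<rho>^2) / d) * (x^2 + y^2))"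
  define G where "G = exp (- ((x - y)^2) / (8 * d))"
  define \<Gamma> where "\<Gamma> = (1 + sqrt d / x) powr gamma_exp \<nu>"
  define B1 where "B1 = besselI (\<nu> + 1) (2 * l)"
  define B0 where "B0 = besselI \<nu> (2 * l)"
  have d0: "d > 0" using \<rho> d by (simp add: power_less_one_iff)
  have l0: "l > 0" using l \<rho> x y d0 by simp
  have k: "1 + \<rho>^2 \<ge> 1" by simp
  have \<Gamma>: "\<Gamma> \<ge> 1" using x d0 by (simp add: \<Gamma>_def one_le_powr_gamma_exp)
  have G: "sqrt d * G \<ge> 0" using d0 by (simp add: G_def)
  have B: "B1 \<ge> 0" "B0 \<ge> 0" using \<nu> l0 by (simp_all add: B1_def B0_def besselI_nonneg)
  have xE: "x * E \<le> 2 * sqrt d * G"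
    using exp_gauss_mult_le[OF d0 k, of x y] by (simp add: E_def G_def)
  have yE: "y * E \<le> 2 * sqrt d * G"
    using exp_gauss_mult_le[OF d0 k, of y x] by (simp add: E_def G_def add.commute power2_commute)
  have "sqrt d * E \<le> sqrt d * G"
    using exp_gauss_le_self[OF d0 k, of x y] d0 by (intro mult_left_mono) (auto simp: E_def G_def)
  have "sqrt l * E * (x * B1) = (x * E) * (sqrt l * B1)" by simp
  also have "\<dots> \<le> (2 * sqrt d * G) * 6"
    using sqrt_mult_besselI_small_le[of "\<nu> + 1" l] \<nu> l0 l B G
    by (intro mult_mono[OF xE]) (auto simp: B1_def mult.commute)
  finally have term1: "sqrt l * E * (x * B1) \<le> 12 * (sqrt d * G) * \<Gamma>"
    using mult_left_mono[OF \<Gamma> G] by simp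
  have "sqrt l * E * (\<rho> * y * B0) = \<rho> * y * E * (sqrt l * B0)" by simp
  also have "\<dots> \<le> \<rho> * y * E * (6 * \<Gamma> * (1 + sqrt d / y) / sqrt \<rho>)"
    using sqrt_mult_besselI_small_le_gamma_exp[OF \<nu> _ _ d0 x y l] \<rho> y
    by (intro mult_left_mono) (auto simp: B0_def E_def \<Gamma>_def)
  also have "\<dots> = 6 * (\<rho> / sqrt \<rho>) * \<Gamma> * (y * E + sqrt d * E)"
    using y \<rho> by (simp add: field_simps)
  also have "\<dots> = 6 * sqrt \<rho> * \<Gamma> * (y * E + sqrt d * E)"
    using \<rho> by (simp add: real_div_sqrt)
  also have "\<dots> \<le> 6 * 1 * \<Gamma> * (y * E + sqrt d * E)"
    using \<rho> \<Gamma> y d0 by (intro mult_right_mono) (auto simp: E_def)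
  also have "\<dots> \<le> 6 * 1 * \<Gamma> * (3 * sqrt d * G)"
    using yE \<open>sqrt d * E \<le> sqrt d * G\<close> \<Gamma> by (intro mult_left_mono) auto
  finally have term2: "sqrt l * E * (\<rho> * y * B0) \<le> 18 * (sqrt d * G) * \<Gamma>"
    by (simp add: mult_ac)
  have "\<bar>x * B1 - \<rho> * y * B0\<bar> \<le> x * B1 + \<rho> * y * B0"
    using x y \<rho> B by (simp add: abs_le_iff)
  then have "sqrt l * E * \<bar>x * B1 - \<rho> * y * B0\<bar> \<le> sqrt l * E * (x * B1) + sqrt l * E * (\<rho> * y * B0)"
    using l0 by (simp add: E_def flip: distrib_left)
  also have "\<dots> \<le> 30 * (sqrt d * G) * \<Gamma>" using term1 term2 by simp
  finally show ?thesis by (simp add: E_def G_def \<Gamma>_def B1_def B0_def mult_ac)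
qed

lemma exp_gauss_mult_exp_le:
  fixes x y \<rho> d :: real
  assumes "d > 0" "0 \<le> \<rho>" "x \<ge> 0" "y \<ge> 0"
  shows "exp (- (1/2) * ((1 + \<rho>^2) / d) * (x^2 + y^2)) * exp (\<rho> * x * y / d) * exp (\<rho> * x * y / d)
    \<le> exp (- ((x - y)^2) / (8 * d)) * exp (- ((x - y)^2) / (8 * d))
      * exp (- ((1 - \<rho>)^2 * (x^2 + y^2)) / (4 * d))"
proof -
  define A where "A = - 2 * (1 + \<rho>^2) * (x^2 + y^2) + 8 * \<rho> * x * y"
  define B where "B = - ((x - y)^2) - (1 - \<rho>)^2 * (x^2 + y^2)"
  have "B - A = (\<rho>^2 + 2 * \<rho>) * (x - y)^2 + 2 * (1 - \<rho>)^2 * (x * y)"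
    unfolding A_def B_def by (simp add: power2_eq_square algebra_simps)
  also have "\<dots> \<ge> 0" using assms by simp
  finally have "A / (4 * d) \<le> B / (4 * d)" using assms by (intro divide_right_mono) auto
  moreover have "exp (- (1/2) * ((1 + \<rho>^2) / d) * (x^2 + y^2)) * exp (\<rho> * x * y / d) * exp (\<rho> * x * y / d)
      = exp (A / (4 * d))"
    unfolding A_def using assms by (simp add: field_simps flip: exp_add)
  moreover have "exp (- ((x - y)^2) / (8 * d)) * exp (- ((x - y)^2) / (8 * d))
      * exp (- ((1 - \<rho>)^2 * (x^2 + y^2)) / (4 * d)) = exp (B / (4 * d))"
    unfolding B_def using assms by (simp add: field_simps flip: exp_add)
  ultimately show ?thesis by simp
qed

corollary exp_gauss_mult_exp_le_weak:
  fixes x y \<rho> d :: real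
  assumes "d > 0" "0 \<le> \<rho>" "x \<ge> 0" "y \<ge> 0"
  shows "exp (- (1/2) * ((1 + \<rho>^2) / d) * (x^2 + y^2)) * exp (\<rho> * x * y / d) * exp (\<rho> * x * y / d)
      \<le> exp (- ((x - y)^2) / (8 * d)) * exp (- ((1 - \<rho>)^2 * (x^2 + y^2)) / (4 * d))"
    and "exp (- (1/2) * ((1 + \<rho>^2) / d) * (x^2 + y^2)) * exp (\<rho> * x * y / d) * exp (\<rho> * x * y / d)
      \<le> exp (- ((x - y)^2) / (8 * d)) * exp (- ((x - y)^2) / (8 * d))"
proof -
  define G where "G = exp (- ((x - y)^2) / (8 * d))"
  define T where "T = exp (- ((1 - \<rho>)^2 * (x^2 + y^2)) / (4 * d))"
  have G: "0 \<le> G" "G \<le> 1" and T: "0 \<le> T" "T \<le> 1"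
    using assms by (auto simp: G_def T_def)
  have "G * G * T \<le> 1 * G * T" "G * G * T \<le> G * G * 1"
    using G T by (intro mult_right_mono mult_left_mono mult_nonneg_nonneg; simp)+
  moreover have "exp (- (1/2) * ((1 + \<rho>^2) / d) * (x^2 + y^2)) * exp (\<rho> * x * y / d) * exp (\<rho> * x * y / d)
      \<le> G * G * T"
    unfolding G_def T_def by (rule exp_gauss_mult_exp_le[OF assms])
  ultimately show "exp (- (1/2) * ((1 + \<rho>^2) / d) * (x^2 + y^2)) * exp (\<rho> * x * y / d) * exp (\<rho> * x * y / d) \<le> G * T"
    and "exp (- (1/2) * ((1 + \<rho>^2) / d) * (x^2 + y^2)) * exp (\<rho> * x * y / d) * exp (\<rho> * x * y / d) \<le> G * G"
    by linarith+
qed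

lemma abs_mult_exp_neg_square_le:
  assumes "d > 0"
  shows "\<bar>v\<bar> * exp (- (v^2) / (8 * d)) \<le> 3 * sqrt d"
proof -
  have "\<bar>v\<bar> * exp (- (\<bar>v\<bar>^2) / (4 * (2 * d))) \<le> 2 * sqrt (2 * d)"
    using assms by (intro mult_exp_neg_square_le) simp
  moreover have "sqrt 2 \<le> 3/2" by (rule real_le_lsqrt) (auto simp: power2_eq_square)
  then have "2 * sqrt (2 * d) \<le> 3 * sqrt d" using assms by (simp add: real_sqrt_mult)
  ultimately show ?thesis by simp
qed

lemma abs_diff_mult_exp_gauss_mult_exp_le:
  fixes x y \<rho> d :: real
  assumes "d > 0" "0 \<le> \<rho>" "x \<ge> 0" "y \<ge> 0"
  shows "\<bar>x - y\<bar> * (exp (- (1/2) * ((1 + \<rho>^2) / d) * (x^2 + y^2)) * exp (\<rho> * x * y / d) * exp (\<rho> * x * y / d))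
    \<le> 3 * sqrt d * exp (- ((x - y)^2) / (8 * d))"
proof -
  define G where "G = exp (- ((x - y)^2) / (8 * d))"
  have "\<bar>x - y\<bar> * (exp (- (1/2) * ((1 + \<rho>^2) / d) * (x^2 + y^2)) * exp (\<rho> * x * y / d) * exp (\<rho> * x * y / d))
      \<le> \<bar>x - y\<bar> * (G * G)"
    using exp_gauss_mult_exp_le_weak(2)[OF assms] by (intro mult_left_mono) (auto simp: G_def)
  also have "\<dots> = (\<bar>x - y\<bar> * G) * G" by (simp add: mult_ac)
  also have "\<dots> \<le> (3 * sqrt d) * G"
    using abs_mult_exp_neg_square_le[OF assms(1), of "x - y"] by (intro mult_right_mono) (simp_all add: G_def)
  finally show ?thesis by (simp add: G_def)
qed

lemma mult_exp_gauss_mult_exp_le: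
  fixes x y \<rho> d :: real
  assumes "d > 0" "0 \<le> \<rho>" "\<rho> \<le> 1" "x \<ge> 0" "y \<ge> 0"
  shows "(1 - \<rho>) * y * (exp (- (1/2) * ((1 + \<rho>^2) / d) * (x^2 + y^2)) * exp (\<rho> * x * y / d) * exp (\<rho> * x * y / d))
    \<le> 2 * sqrt d * exp (- ((x - y)^2) / (8 * d))"
proof -
  define G where "G = exp (- ((x - y)^2) / (8 * d))"
  define T where "T = exp (- ((1 - \<rho>)^2 * (x^2 + y^2)) / (4 * d))"
  have "((1 - \<rho>) * y)^2 \<le> (1 - \<rho>)^2 * (x^2 + y^2)"
    unfolding power_mult_distrib by (intro mult_left_mono) auto
  then have "T \<le> exp (- (((1 - \<rho>) * y)^2) / (4 * d))"
    using assms by (simp add: T_def divide_right_mono)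
  then have "(1 - \<rho>) * y * T \<le> 2 * sqrt d"
    using mult_exp_neg_square_le[OF assms(1), of "(1 - \<rho>) * y"] assms
    by (elim order.trans[rotated]) (simp add: mult_left_mono)
  have "(1 - \<rho>) * y * (exp (- (1/2) * ((1 + \<rho>^2) / d) * (x^2 + y^2)) * exp (\<rho> * x * y / d) * exp (\<rho> * x * y / d))
      \<le> (1 - \<rho>) * y * (G * T)"
    using exp_gauss_mult_exp_le_weak(1)[OF assms(1,2,4,5)] assms by (intro mult_left_mono) (auto simp: G_def T_def)
  also have "\<dots> = ((1 - \<rho>) * y * T) * G" by (simp add: mult_ac)
  also have "\<dots> \<le> 2 * sqrt d * G" using \<open>(1 - \<rho>) * y * T \<le> 2 * sqrt d\<close> by (simp add: G_def)
  finally show ?thesis by (simp add: G_def)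
qed

lemma exp_tail_le_sqrt:
  assumes \<rho>: "0 < \<rho>" "\<rho> \<le> 1" and d: "d > 0" and xy: "d \<le> \<rho> * (x * y)"
  shows "exp (- ((1 - \<rho>)^2 * (x^2 + y^2)) / (4 * d)) \<le> 2 * sqrt \<rho>"
proof -
  have "2 * (x * y) \<le> x^2 + y^2" using sum_squares_bound[of x y] by (simp add: power2_eq_square)
  moreover have "d / \<rho> \<le> x * y" using xy \<rho> by (simp add: field_simps)
  ultimately have "2 * d / \<rho> \<le> x^2 + y^2" by simp
  then have "(1 - \<rho>)^2 * (2 * d / \<rho>) / (4 * d) \<le> (1 - \<rho>)^2 * (x^2 + y^2) / (4 * d)"
    using d by (intro divide_right_mono mult_left_mono) auto
  moreover have "(1 - \<rho>)^2 * (2 * d / \<rho>) / (4 * d) = (1 - \<rho>)^2 / (2 * \<rho>)"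
    using d \<rho> by (simp add: field_simps)
  ultimately have "exp (- ((1 - \<rho>)^2 * (x^2 + y^2)) / (4 * d)) \<le> exp (- ((1 - \<rho>)^2 / (2 * \<rho>)))"
    by simp
  also have "\<dots> \<le> 2 * sqrt \<rho>" by (rule exp_neg_square_div_le_sqrt[OF \<rho>])
  finally show ?thesis .
qed

lemma div_le_sqrt_of_le_two_mul:
  assumes \<rho>: "0 < \<rho>" and d: "d > 0" and y: "y > 0" and l: "l = \<rho> * x * y / d" "l \<ge> 1"
    and x: "x \<le> 2 * y"
  shows "x / l \<le> sqrt 2 * sqrt d / sqrt \<rho>"
proof -
  have "d * 1 \<le> d * l" using l(2) d by (intro mult_left_mono) auto
  then have "d / \<rho> \<le> x * y" using l(1) d \<rho> by (simp add: field_simps)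
  also have "\<dots> \<le> 2 * y^2" using x y by (simp add: power2_eq_square mult_right_mono)
  finally have "sqrt (d / (2 * \<rho>)) \<le> y"
    using y \<rho> by (simp add: real_le_lsqrt field_simps)
  have "x / l = d / (\<rho> * y)" using l \<rho> d y by (simp add: field_simps)
  also have "\<dots> \<le> d / (\<rho> * sqrt (d / (2 * \<rho>)))"
    using \<open>sqrt (d / (2 * \<rho>)) \<le> y\<close> \<rho> d y
    by (intro divide_left_mono mult_left_mono mult_pos_pos) auto
  also have "\<dots> = sqrt 2 * sqrt d / sqrt \<rho>"
    using \<rho> d by (simp add: real_sqrt_divide real_sqrt_mult field_simps)
  finally show ?thesis .
qed

lemma div_mult_exp_gauss_le:
  assumes \<rho>: "0 < \<rho>" "\<rho> < 1" and d: "d = 1 - \<rho>^2"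
    and x: "x > 0" and y: "y > 0" and l: "l = \<rho> * x * y / d" "l \<ge> 1"
  shows "x / l * (exp (- (1/2) * ((1 + \<rho>^2) / d) * (x^2 + y^2)) * exp l * exp l)
    \<le> 6 * sqrt d * exp (- ((x - y)^2) / (8 * d))"
proof -
  define G where "G = exp (- ((x - y)^2) / (8 * d))"
  define T where "T = exp (- ((1 - \<rho>)^2 * (x^2 + y^2)) / (4 * d))"
  define H where "H = exp (- (1/2) * ((1 + \<rho>^2) / d) * (x^2 + y^2)) * exp l * exp l"
  have d0: "d > 0" using \<rho> d by (simp add: power_less_one_iff)
  have H: "0 \<le> H" "H \<le> G * T"
    using exp_gauss_mult_exp_le_weak(1)[OF d0, of \<rho> x y] \<rho> x y by (simp_all add: H_def G_def T_def l(1))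
  show ?thesis
  proof (cases "x \<le> 2 * y")
    case True
    have "d * 1 \<le> d * l" using l(2) d0 by (intro mult_left_mono) auto
    then have "T \<le> 2 * sqrt \<rho>"
      using exp_tail_le_sqrt[of \<rho> d x y] \<rho> d0 l(1) by (simp add: T_def mult.assoc)
    then have "x / l * H \<le> (sqrt 2 * sqrt d / sqrt \<rho>) * (G * (2 * sqrt \<rho>))"
      using div_le_sqrt_of_le_two_mul[OF \<rho>(1) d0 y l True] H x l d0 \<rho>
      by (intro mult_mono order.trans[OF H(2)] mult_left_mono) (auto simp: G_def)
    also have "\<dots> = 2 * sqrt 2 * (sqrt d * G)" using \<rho> by simp
    also have "\<dots> \<le> 6 * (sqrt d * G)"
      using real_sqrt_le_mono[of 2 9] d0 by (intro mult_right_mono) (auto simp: G_def)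
    finally show ?thesis by (simp add: H_def G_def mult_ac)
  next
    case False
    have "x / l \<le> x" using l(2) x by (simp add: divide_le_eq mult_le_cancel_left1)
    then have "x / l \<le> 2 * \<bar>x - y\<bar>" using False y by simp
    then have "x / l * H \<le> 2 * \<bar>x - y\<bar> * H" using H by (intro mult_right_mono) auto
    then have "x / l * H \<le> 2 * (\<bar>x - y\<bar> * H)" by (simp add: mult_ac)
    also have "\<dots> \<le> 2 * (3 * sqrt d * G)"
      using abs_diff_mult_exp_gauss_mult_exp_le[OF d0, of \<rho> x y] \<rho> x y
      by (simp add: H_def G_def l(1) mult_ac)
    finally show ?thesis by (simp add: H_def G_def)
  qed
qed

lemma sqrt_mult_bessel_combination_le:
  assumes \<nu>: "\<nu> > -1" and l: "l \<ge> 1" and \<rho>: "0 \<le> \<rho>" "\<rho> \<le> 1" and x: "x \<ge> 0" and y: "y \<ge> 0"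
  shows "sqrt l * \<bar>x * besselI (\<nu> + 1) (2 * l) - \<rho> * y * besselI \<nu> (2 * l)\<bar>
    \<le> exp l * exp l * (besselI_diff_const \<nu> * (x / l) + 60 * \<bar>x - y\<bar> + 60 * ((1 - \<rho>) * y))"
proof -
  define B1 where "B1 = besselI (\<nu> + 1) (2 * l)"
  define B0 where "B0 = besselI \<nu> (2 * l)"
  have l0: "l > 0" using l by simp
  have B0: "0 \<le> B0" "sqrt l * B0 \<le> 60 * (exp l * exp l)"
    using besselI_nonneg[OF \<nu>, of "2 * l"] besselI_large_le[OF l \<nu>] l0
    by (simp_all add: B0_def field_simps)
  have B10: "sqrt l * \<bar>B1 - B0\<bar> \<le> besselI_diff_const \<nu> * (exp l * exp l) / l"
    using besselI_diff_large_le[OF l \<nu>] l0 by (simp add: B0_def B1_def abs_minus_commute field_simps)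
  have "x * B1 - \<rho> * y * B0 = x * (B1 - B0) + (x - y) * B0 + (1 - \<rho>) * y * B0"
    by (simp add: algebra_simps)
  then have "\<bar>x * B1 - \<rho> * y * B0\<bar> \<le> x * \<bar>B1 - B0\<bar> + \<bar>x - y\<bar> * B0 + (1 - \<rho>) * y * B0"
    using x y \<rho> B0 by (simp add: abs_mult abs_triangle_ineq3 order.trans[OF abs_triangle_ineq])
  then have "sqrt l * \<bar>x * B1 - \<rho> * y * B0\<bar>
      \<le> sqrt l * (x * \<bar>B1 - B0\<bar> + \<bar>x - y\<bar> * B0 + (1 - \<rho>) * y * B0)"
    using l0 by (intro mult_left_mono) simp_all
  also have "\<dots> = x * (sqrt l * \<bar>B1 - B0\<bar>) + (\<bar>x - y\<bar> + (1 - \<rho>) * y) * (sqrt l * B0)"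
    by (simp add: algebra_simps)
  also have "\<dots> \<le> x * (besselI_diff_const \<nu> * (exp l * exp l) / l) + (\<bar>x - y\<bar> + (1 - \<rho>) * y) * (60 * (exp l * exp l))"
    using x y \<rho> by (intro add_mono mult_left_mono B10 B0(2)) auto
  finally show ?thesis by (simp add: B0_def B1_def algebra_simps)
qed

lemma bessel_combination_le_of_ge_one:
  assumes \<nu>: "\<nu> > -1" and \<rho>: "0 < \<rho>" "\<rho> < 1" and d: "d = 1 - \<rho>^2"
    and x: "x > 0" and y: "y > 0" and l: "l = \<rho> * x * y / d" "l \<ge> 1"
  shows "sqrt l * exp (- (1/2) * ((1 + \<rho>^2) / d) * (x^2 + y^2))
      * \<bar>x * besselI (\<nu> + 1) (2 * l) - \<rho> * y * besselI \<nu> (2 * l)\<bar>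
    \<le> (300 + 6 * besselI_diff_const \<nu>) * sqrt d * exp (- ((x - y)^2) / (8 * d))
      * (1 + sqrt d / x) powr gamma_exp \<nu>"
proof -
  define K where "K = besselI_diff_const \<nu>"
  define E where "E = exp (- (1/2) * ((1 + \<rho>^2) / d) * (x^2 + y^2))"
  define G where "G = exp (- ((x - y)^2) / (8 * d))"
  define H where "H = E * exp l * exp l"
  have d0: "d > 0" using \<rho> d by (simp add: power_less_one_iff)
  have K: "K > 0" using besselI_diff_const_pos[OF \<nu>] by (simp add: K_def)
  have "sqrt l * E * \<bar>x * besselI (\<nu> + 1) (2 * l) - \<rho> * y * besselI \<nu> (2 * l)\<bar>
      \<le> E * (exp l * exp l * (K * (x / l) + 60 * \<bar>x - y\<bar> + 60 * ((1 - \<rho>) * y)))"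
    using sqrt_mult_bessel_combination_le[OF \<nu> l(2), of \<rho> x y] \<rho> x y
    by (subst mult.commute, subst mult.assoc) (intro mult_left_mono, auto simp: K_def E_def)
  also have "\<dots> = K * (x / l * H) + 60 * (\<bar>x - y\<bar> * H) + 60 * ((1 - \<rho>) * y * H)"
    by (simp add: H_def algebra_simps)
  also have "\<dots> \<le> K * (6 * sqrt d * G) + 60 * (3 * sqrt d * G) + 60 * (2 * sqrt d * G)"
  proof (intro add_mono mult_left_mono)
    show "x / l * H \<le> 6 * sqrt d * G"
      using div_mult_exp_gauss_le[OF \<rho> d x y l] by (simp add: H_def E_def G_def)
    show "\<bar>x - y\<bar> * H \<le> 3 * sqrt d * G"
      using abs_diff_mult_exp_gauss_mult_exp_le[OF d0, of \<rho> x y] \<rho> x y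
      by (simp add: H_def E_def G_def l(1))
    show "(1 - \<rho>) * y * H \<le> 2 * sqrt d * G"
      using mult_exp_gauss_mult_exp_le[OF d0, of \<rho> x y] \<rho> x y
      by (simp add: H_def E_def G_def l(1))
  qed (use K in auto)
  also have "\<dots> = (300 + 6 * K) * (sqrt d * G)" by (simp add: algebra_simps)
  also have "\<dots> \<le> (300 + 6 * K) * (sqrt d * G) * (1 + sqrt d / x) powr gamma_exp \<nu>"
  proof -
    have "0 \<le> (300 + 6 * K) * (sqrt d * G)" using K d0 by (simp add: G_def)
    moreover have "1 \<le> (1 + sqrt d / x) powr gamma_exp \<nu>"
      using d0 x by (intro one_le_powr_gamma_exp) simp
    ultimately show ?thesis using mult_left_mono[of 1] by fastforce
  qed
  finally show ?thesis by (simp add: K_def E_def G_def mult_ac)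
qed

lemma heat_kernel_prefactor_eq:
  assumes "0 < \<rho>" "d > 0" "x > 0" "y > 0"
  shows "(2 / d) * (2 * \<rho> * sqrt (x * y) / d) = 4 * sqrt \<rho> / (d * sqrt d) * sqrt (\<rho> * x * y / d)"
proof -
  have gen: "(2 / (q * q)) * (2 * (s * s) * (q * L / s) / (q * q)) = 4 * s / ((q * q) * q) * L"
    if "s > 0" "q > 0" for s q L :: real
    using that by (simp add: field_simps)
  have "sqrt (x * y) = sqrt d * sqrt (\<rho> * x * y / d) / sqrt \<rho>"
    using assms by (simp add: real_sqrt_divide real_sqrt_mult field_simps)
  then have "(2 / d) * (2 * \<rho> * sqrt (x * y) / d)
      = (2 / (sqrt d * sqrt d)) * (2 * (sqrt \<rho> * sqrt \<rho>)
        * (sqrt d * sqrt (\<rho> * x * y / d) / sqrt \<rho>) / (sqrt d * sqrt d))"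
    using assms by simp
  also have "\<dots> = 4 * sqrt \<rho> / ((sqrt d * sqrt d) * sqrt d) * sqrt (\<rho> * x * y / d)"
    using assms by (intro gen) auto
  finally show ?thesis using assms by simp
qed

lemma delta_star_formula_abs_le:
  assumes \<nu>: "\<nu> > -1" and \<rho>: "0 < \<rho>" "\<rho> < 1" and d: "d = 1 - \<rho>^2" and x: "x > 0" and y: "y > 0"
  shows "\<bar>(2 / d) * (2 * \<rho> * sqrt (x * y) / d) * exp (- (1/2) * ((1 + \<rho>^2) / d) * (x^2 + y^2))
      * (x * besselI (\<nu> + 1) (2 * \<rho> / d * x * y) - \<rho> * y * besselI \<nu> (2 * \<rho> / d * x * y))\<bar>
    \<le> (1200 + 24 * besselI_diff_const \<nu>) * sqrt \<rho> / d * exp (- ((x - y)^2) / (8 * d))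
      * (1 + sqrt d / x) powr gamma_exp \<nu>"
proof -
  define l where "l = \<rho> * x * y / d"
  define M where "M = 300 + 6 * besselI_diff_const \<nu>"
  define E where "E = exp (- (1/2) * ((1 + \<rho>^2) / d) * (x^2 + y^2))"
  define R where "R = sqrt d * exp (- ((x - y)^2) / (8 * d)) * (1 + sqrt d / x) powr gamma_exp \<nu>"
  have d0: "d > 0" using \<rho> d by (simp add: power_less_one_iff)
  have core: "sqrt l * E * \<bar>x * besselI (\<nu> + 1) (2 * l) - \<rho> * y * besselI \<nu> (2 * l)\<bar> \<le> M * R"
  proof (cases "l \<le> 1")
    case True
    have "30 * R \<le> M * R"
      using besselI_diff_const_pos[OF \<nu>] d0 by (intro mult_right_mono) (auto simp: M_def R_def)
    then show ?thesis
      using bessel_combination_le_of_le_one[OF \<nu> \<rho> d x y l_def True] by (simp add: E_def R_def mult_ac)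
  next
    case False
    then show ?thesis
      using bessel_combination_le_of_ge_one[OF \<nu> \<rho> d x y l_def] by (simp add: E_def R_def M_def mult_ac)
  qed
  have l0: "l > 0" using \<rho> x y d0 by (simp add: l_def)
  have "(2 / d) * (2 * \<rho> * sqrt (x * y) / d) = 4 * sqrt \<rho> / (d * sqrt d) * sqrt l"
    using heat_kernel_prefactor_eq[OF \<rho>(1) d0 x y] by (simp add: l_def)
  moreover have "2 * \<rho> / d * x * y = 2 * l" by (simp add: l_def)
  ultimately have "\<bar>(2 / d) * (2 * \<rho> * sqrt (x * y) / d) * E
      * (x * besselI (\<nu> + 1) (2 * \<rho> / d * x * y) - \<rho> * y * besselI \<nu> (2 * \<rho> / d * x * y))\<bar>
    = 4 * sqrt \<rho> / (d * sqrt d) * (sqrt l * E * \<bar>x * besselI (\<nu> + 1) (2 * l) - \<rho> * y * besselI \<nu> (2 * l)\<bar>)"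
    using \<rho> d0 l0 by (simp add: E_def abs_mult)
  also have "\<dots> \<le> 4 * sqrt \<rho> / (d * sqrt d) * (M * R)"
    using core \<rho> d0 by (intro mult_left_mono) auto
  also have "\<dots> = 4 * M * sqrt \<rho> / d * exp (- ((x - y)^2) / (8 * d)) * (1 + sqrt d / x) powr gamma_exp \<nu>"
    using d0 by (simp add: R_def field_simps)
  finally show ?thesis by (simp add: E_def M_def)
qed

lemma heat_kernel_parameter_bounds:
  assumes t: "t > 0"
  defines "\<rho> \<equiv> exp (-2 * t)"
  defines "d \<equiv> 1 - \<rho>^2"
  shows "0 < d" and "d \<le> 4 * t" and "sqrt \<rho> / d \<le> (5/4) / t"
proof -
  have d_eq: "d = 1 - exp (-4 * t)" by (simp add: d_def \<rho>_def power2_eq_square flip: exp_add)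
  show d0: "0 < d" using t by (simp add: d_eq)
  show "d \<le> 4 * t" using exp_ge_add_one_self[of "-4 * t"] by (simp add: d_eq)
  have "exp (-4 * t) * (1 + 4 * t) \<le> 1"
    using exp_ge_add_one_self[of "4 * t"] by (simp add: exp_minus field_simps)
  then have d_ge: "4 * t / (1 + 4 * t) \<le> d" using t by (simp add: d_eq field_simps)
  have sqrt_\<rho>: "sqrt \<rho> = exp (- t)"
    unfolding \<rho>_def by (rule real_sqrt_unique) (simp_all add: power2_eq_square flip: exp_add)
  have "sqrt \<rho> / d \<le> exp (- t) / (4 * t / (1 + 4 * t))"
    unfolding sqrt_\<rho> using d_ge d0 t by (intro divide_left_mono) auto
  also have "\<dots> = exp (- t) / (4 * t) + exp (- t)" using t by (simp add: field_simps)
  also have "\<dots> \<le> 1 / (4 * t) + 1 / t"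
  proof -
    have "exp (- t) / (4 * t) \<le> 1 / (4 * t)" using t by (intro divide_right_mono) auto
    moreover have "t \<le> exp t" using exp_ge_add_one_self[of t] by linarith
    then have "exp (- t) \<le> 1 / t" using t by (simp add: exp_minus field_simps)
    ultimately show ?thesis by linarith
  qed
  finally show "sqrt \<rho> / d \<le> (5/4) / t" using t by (simp add: field_simps)
qed

lemma heat_kernel_time_scale_le:
  fixes g :: real
  assumes t: "t > 0" and x: "x > 0" and K: "K \<ge> 0" and g: "g \<ge> 0"
  defines "\<rho> \<equiv> exp (-2 * t)"
  defines "d \<equiv> 1 - \<rho>^2"
  shows "K * sqrt \<rho> / d * exp (- ((x - y)^2) / (8 * d)) * (1 + sqrt d / x) powr g
    \<le> K * (5/4) * 2 powr g / t * exp (- (\<bar>x - y\<bar>^2) / (32 * t)) * (1 + sqrt t / x) powr g"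
proof -
  note d = heat_kernel_parameter_bounds[OF t, folded \<rho>_def d_def]
  have gauss: "exp (- ((x - y)^2) / (8 * d)) \<le> exp (- (\<bar>x - y\<bar>^2) / (32 * t))"
    using d t by (simp add: frac_le)
  have "sqrt d \<le> 2 * sqrt t" using real_sqrt_le_mono[OF d(2)] by (simp add: real_sqrt_mult)
  then have "sqrt d / x \<le> 2 * (sqrt t / x)" using x by (simp add: divide_right_mono)
  moreover have "0 \<le> sqrt t / x" using x t by simp
  ultimately have "1 + sqrt d / x \<le> 2 * (1 + sqrt t / x)" unfolding distrib_left by linarith
  then have gamma: "(1 + sqrt d / x) powr g \<le> 2 powr g * (1 + sqrt t / x) powr g"
    using g d x by (simp add: powr_mono2 flip: powr_mult)
  have "K * sqrt \<rho> / d * exp (- ((x - y)^2) / (8 * d)) * (1 + sqrt d / x) powr g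
      = K * (sqrt \<rho> / d) * exp (- ((x - y)^2) / (8 * d)) * (1 + sqrt d / x) powr g" by simp
  also have "\<dots> \<le> K * ((5/4) / t) * exp (- (\<bar>x - y\<bar>^2) / (32 * t)) * (2 powr g * (1 + sqrt t / x) powr g)"
    using d gauss gamma K t by (intro mult_mono mult_left_mono) (auto simp: \<rho>_def)
  finally show ?thesis by (simp add: field_simps)
qed

theorem proposition3p4:
  fixes \<nu> :: real
  assumes "\<nu> > -1"
  shows "\<exists>C c. C > 0 \<and> c > 0 \<and>
    (\<forall>t x y. t > 0 \<longrightarrow> x > 0 \<longrightarrow> y > 0 \<longrightarrow>
      \<bar>delta_star \<nu> (\<lambda>z. laguerre_heat_kernel (\<nu> + 1) t z y) x\<bar>
        \<le> C / t * exp (- (\<bar>x - y\<bar>^2) / (c * t)) * (1 + sqrt t / x) powr (gamma_exp \<nu>))"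
proof -
  define K where "K = 1200 + 24 * besselI_diff_const \<nu>"
  have K: "K > 0" using besselI_diff_const_pos[OF assms] by (simp add: K_def)
  have "\<bar>delta_star \<nu> (\<lambda>z. laguerre_heat_kernel (\<nu> + 1) t z y) x\<bar>
      \<le> K * (5/4) * 2 powr gamma_exp \<nu> / t * exp (- (\<bar>x - y\<bar>^2) / (32 * t)) * (1 + sqrt t / x) powr gamma_exp \<nu>"
    if "t > 0" "x > 0" "y > 0" for t x y
  proof -
    define \<rho> where "\<rho> = exp (-2 * t)"
    have "0 < \<rho>" "\<rho> < 1" using that by (auto simp: \<rho>_def)
    then have "\<bar>delta_star \<nu> (\<lambda>z. laguerre_heat_kernel (\<nu> + 1) t z y) x\<bar>
        \<le> K * sqrt \<rho> / (1 - \<rho>^2) * exp (- ((x - y)^2) / (8 * (1 - \<rho>^2)))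
          * (1 + sqrt (1 - \<rho>^2) / x) powr gamma_exp \<nu>"
      unfolding delta_star_laguerre_heat_kernel[OF assms that] \<rho>_def[symmetric] K_def
      using delta_star_formula_abs_le[OF assms _ _ refl that(2,3)] by simp
    also have "\<dots> \<le> K * (5/4) * 2 powr gamma_exp \<nu> / t * exp (- (\<bar>x - y\<bar>^2) / (32 * t))
        * (1 + sqrt t / x) powr gamma_exp \<nu>"
      unfolding \<rho>_def using heat_kernel_time_scale_le[OF that(1,2)] K gamma_exp_nonneg by simp
    finally show ?thesis .
  qed
  moreover have "K * (5/4) * 2 powr gamma_exp \<nu> > 0" using K by simp
  ultimately show ?thesis by (intro exI[of _ "K * (5/4) * 2 powr gamma_exp \<nu>"] exI[of _ 32]) auto
qed

end
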